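(* Let $H$, its Coxeter generators $s_1,\dots,s_6,s_{3'}$, $G$, the cosets $\pm v(i,j)$, and $H_1$ with its Coxeter generators $a_1,\dots,a_5,a_{1'}$ be as in the context, and define $Q=\langle s_1,s_2,s_3,s_4,s_5,s_{3'}\rangle\subset H$. Then: (a) $Q$ is isomorphic to $H_1$ via the map $m$ determined on generators by $m(s_k)=a_{6-k}$ for $1\le k\le 5$ and $m(s_{3'})=a_{1'}$ (so $Q\cong W(D_6)$); (b) the action of $Q$ by right multiplication on the 56 right cosets of $G$ in $H$ has exactly three orbits, namely $\mathscr{O}_1=\{v(0,j):2\le j\le7\}\cup\{-v(1,j):2\le j\le 7\}$, $\mathscr{O}_2=\{v(1,j):2\le j\le7\}\cup\{-v(0,j):2\le j\le 7\}$, $\mathscr{O}_3=\{\pm v(i,j): (i,j)=(0,1)\text{ or } 2\le i<j\le 7\}$.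
   Context: Let $W=\{(a,b,c,d,e,f,g,h)^T\in\mathbb{C}^8: 2+3a=b+c+d+e+f+g+h\}$. A transposition $(ij)$ is identified with the permutation matrix swapping coordinates $i$ and $j$. Let $X\in GL(8,\mathbb{C})$ be the matrix whose rows are $(\tfrac12,\tfrac12,-\tfrac12,-\tfrac12,-\tfrac12,\tfrac12,\tfrac12,\tfrac12)$, $e_2$, $(-\tfrac12,\tfrac12,\tfrac12,-\tfrac12,-\tfrac12,\tfrac12,\tfrac12,\tfrac12)$, $(-\tfrac12,\tfrac12,-\tfrac12,\tfrac12,-\tfrac12,\tfrac12,\tfrac12,\tfrac12)$, $(-\tfrac12,\tfrac12,-\tfrac12,-\tfrac12,\tfrac12,\tfrac12,\tfrac12,\tfrac12)$, $e_6,e_7,e_8$, and $Y$ the matrix with rows $(-1,2,0,0,0,0,0,0)$, $(-1,1,1,0,0,0,0,0)$, $(0,1,0,0,0,0,0,0)$, and $-e_1+e_2+e_r$ for $r=4,\dots,8$. Let $H=\langle(23),(34),(45),(56),(67),(78),X,Y\rangle\cong W(E_7)$ with Coxeter generators $s_1=Y(23)$, $s_2=(34)$, $s_3=(45)$, $s_4=(56)$, $s_5=(67)$, $s_6=(78)$, $s_{3'}=X$, and $G=\langle s_2,\dots,s_6,s_{3'}\rangle$. For $\vec w\in W$ put $x_0=b,x_1=h,x_2=g,x_3=f,x_4=e,x_5=d,x_6=c,x_7=a$. The right coset $G\alpha$ is determined by the second entry of $\alpha\vec w$ (as an affine function of $\vec w$); $v(i,j)$ ($0\le i<j\le7$) is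 the coset for which this entry is $x_i+x_j-x_7$, and $-v(i,j)$ the coset for which it is $1+x_7-x_i-x_j$; these are all 56 cosets. Let $V=\{(A,\dots,G)^T\in\mathbb{C}^7:E+F+G-A-B-C-D=1\}$, let $X_1\in GL(7,\mathbb{C})$ have rows $e_1$, $-e_3+e_5$, $-e_2+e_5$, $e_4$, $e_5$, $-e_2-e_3+e_5+e_6$, $-e_2-e_3+e_5+e_7$, and let $H_1=\langle(12),(23),(34),(56),(67),X_1\rangle\subset GL(7,\mathbb{C})$ ($\cong W(D_6)$), with Coxeter generators $a_1=(23),a_2=(34),a_3=X_1,a_4=(56),a_5=(67),a_{1'}=(14)$. *)

theory Defs
  imports "Jordan_Normal_Form.Matrix" "HOL-Algebra.Coset" "HOL-Algebra.Generated_Groups" "HOL-Algebra.Group_Action"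
begin

definition GLm :: "nat \<Rightarrow> complex mat monoid" where
  "GLm n = \<lparr>carrier = {A \<in> carrier_mat n n. invertible_mat A}, mult = (*), one = 1\<^sub>m n\<rparr>"

definition gen_grp :: "nat \<Rightarrow> complex mat set \<Rightarrow> complex mat monoid" where
  "gen_grp n S = (GLm n)\<lparr>carrier := generate (GLm n) S\<rparr>"

text \<open>Permutation matrix of the transposition (i j), coordinates numbered 1..n as in the paper.\<close>
definition tmat :: "nat \<Rightarrow> nat \<Rightarrow> nat \<Rightarrow> complex mat" where
  "tmat n i j = mat n n (\<lambda>(r,c). if (if r = i - 1 then j - 1 else if r = j - 1 then i - 1 else r) = c
                                   then 1 else 0)"

definition Xm :: "complex mat" where
  "Xm = mat_of_rows_list 8
    [[1/2, 1/2, -1/2, -1/2, -1/2, 1/2, 1/2, 1/2],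
     [0, 1, 0, 0, 0, 0, 0, 0],
     [-1/2, 1/2, 1/2, -1/2, -1/2, 1/2, 1/2, 1/2],
     [-1/2, 1/2, -1/2, 1/2, -1/2, 1/2, 1/2, 1/2],
     [-1/2, 1/2, -1/2, -1/2, 1/2, 1/2, 1/2, 1/2],
     [0, 0, 0, 0, 0, 1, 0, 0],
     [0, 0, 0, 0, 0, 0, 1, 0],
     [0, 0, 0, 0, 0, 0, 0, 1]]"

definition Ym :: "complex mat" where
  "Ym = mat_of_rows_list 8
    [[-1, 2, 0, 0, 0, 0, 0, 0],
     [-1, 1, 1, 0, 0, 0, 0, 0],
     [0, 1, 0, 0, 0, 0, 0, 0],
     [-1, 1, 0, 1, 0, 0, 0, 0],
     [-1, 1, 0, 0, 1, 0, 0, 0],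
     [-1, 1, 0, 0, 0, 1, 0, 0],
     [-1, 1, 0, 0, 0, 0, 1, 0],
     [-1, 1, 0, 0, 0, 0, 0, 1]]"

definition X1m :: "complex mat" where
  "X1m = mat_of_rows_list 7
    [[1, 0, 0, 0, 0, 0, 0],
     [0, 0, -1, 0, 1, 0, 0],
     [0, -1, 0, 0, 1, 0, 0],
     [0, 0, 0, 1, 0, 0, 0],
     [0, 0, 0, 0, 1, 0, 0],
     [0, -1, -1, 0, 1, 1, 0],
     [0, -1, -1, 0, 1, 0, 1]]"

definition s1 :: "complex mat" where "s1 = Ym * tmat 8 2 3"
definition s2 :: "complex mat" where "s2 = tmat 8 3 4"
definition s3 :: "complex mat" where "s3 = tmat 8 4 5"
definition s4 :: "complex mat" where "s4 = tmat 8 5 6"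
definition s5 :: "complex mat" where "s5 = tmat 8 6 7"
definition s6 :: "complex mat" where "s6 = tmat 8 7 8"
definition s3' :: "complex mat" where "s3' = Xm"

definition Hgrp :: "complex mat monoid" where
  "Hgrp = gen_grp 8 {tmat 8 2 3, tmat 8 3 4, tmat 8 4 5, tmat 8 5 6, tmat 8 6 7, tmat 8 7 8, Xm, Ym}"

definition Ggrp :: "complex mat monoid" where
  "Ggrp = gen_grp 8 {s2, s3, s4, s5, s6, s3'}"

definition Qgrp :: "complex mat monoid" where
  "Qgrp = gen_grp 8 {s1, s2, s3, s4, s5, s3'}"

definition a1 :: "complex mat" where "a1 = tmat 7 2 3"
definition a2 :: "complex mat" where "a2 = tmat 7 3 4"
definition a3 :: "complex mat" where "a3 = X1m"
definition a4 :: "complex mat" where "a4 = tmat 7 5 6"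
definition a5 :: "complex mat" where "a5 = tmat 7 6 7"
definition a1' :: "complex mat" where "a1' = tmat 7 1 4"

definition H1grp :: "complex mat monoid" where
  "H1grp = gen_grp 7 {tmat 7 1 2, tmat 7 2 3, tmat 7 3 4, tmat 7 5 6, tmat 7 6 7, X1m}"

text \<open>Vectors (a,b,c,d,e,f,g,h) are stored with index 0..7.\<close>
definition Wset :: "complex vec set" where
  "Wset = {w \<in> carrier_vec 8. 2 + 3 * w $ 0 = w $ 1 + w $ 2 + w $ 3 + w $ 4 + w $ 5 + w $ 6 + w $ 7}"

text \<open>x_0=b, x_1=h, x_2=g, x_3=f, x_4=e, x_5=d, x_6=c, x_7=a.\<close>
definition xc :: "nat \<Rightarrow> complex vec \<Rightarrow> complex" where
  "xc k w = w $ ([1, 7, 6, 5, 4, 3, 2, 0] ! k)"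

text \<open>The right coset of G in H on which the second entry of alpha w is x_i + x_j - x_7 (on W).\<close>
definition vpos :: "nat \<Rightarrow> nat \<Rightarrow> complex mat set" where
  "vpos i j = {\<alpha> \<in> carrier Hgrp. \<forall>w \<in> Wset. (\<alpha> *\<^sub>v w) $ 1 = xc i w + xc j w - xc 7 w}"

definition vneg :: "nat \<Rightarrow> nat \<Rightarrow> complex mat set" where
  "vneg i j = {\<alpha> \<in> carrier Hgrp. \<forall>w \<in> Wset. (\<alpha> *\<^sub>v w) $ 1 = 1 + xc 7 w - xc i w - xc j w}"

definition Q_orbit :: "complex mat set \<Rightarrow> complex mat set set" where
  "Q_orbit C = {C #>\<^bsub>Hgrp\<^esub> q | q. q \<in> carrier Qgrp}"

definition Q_orbits :: "complex mat set set set" where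
  "Q_orbits = Q_orbit ` (rcosets\<^bsub>Hgrp\<^esub> (carrier Ggrp))"

definition O1 :: "complex mat set set" where
  "O1 = {vpos 0 j | j. 2 \<le> j \<and> j \<le> 7} \<union> {vneg 1 j | j. 2 \<le> j \<and> j \<le> 7}"

definition O2 :: "complex mat set set" where
  "O2 = {vpos 1 j | j. 2 \<le> j \<and> j \<le> 7} \<union> {vneg 0 j | j. 2 \<le> j \<and> j \<le> 7}"

definition O3 :: "complex mat set set" where
  "O3 = {vpos 0 1, vneg 0 1} \<union> {vpos i j | i j. 2 \<le> i \<and> i < j \<and> j \<le> 7}
                             \<union> {vneg i j | i j. 2 \<le> i \<and> i < j \<and> j \<le> 7}"

end

theory Submission
  imports Defs
begin

(* H acts on row vectors from the right, and the second row of alpha in H is e2 alpha.  Writing the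
   56 row vectors of the affine forms x_i + x_j - x_7 and 1 + x_7 - x_i - x_j as labels +-v(i,j),
   each Coxeter generator of H permutes the labels (as an index transposition, or, for s3', by an
   exchange of complementary pairs), and the cosets +-v(i,j) are the sets of alpha with a given
   second row.  G fixes e2 = v(0,7), and an explicit Schreier transversal shows that its
   stabiliser is exactly G, so the cosets of G are precisely the 56 sets +-v(i,j), and right
   multiplication by Q becomes the action of Q on labels, whose three orbits are computed.
   For (a), Q fixes a vector and acts on a complementary 7-dimensional subspace through the
   generators of H1; compressing to that subspace is an injective homomorphism onto H1. *)

definition mult_vec_mat :: "'a::semiring_0 vec \<Rightarrow> 'a mat \<Rightarrow> 'a vec" where
  "mult_vec_mat v A = vec (dim_col A) (\<lambda>j. v \<bullet> col A j)"

lemma mult_vec_mat_carrier [simp]: "A \<in> carrier_mat n m \<Longrightarrow> mult_vec_mat v A \<in> carrier_vec m"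
  by (simp add: mult_vec_mat_def)

lemma mult_vec_mat_mult:
  assumes "A \<in> carrier_mat n n" "B \<in> carrier_mat n n" "v \<in> carrier_vec n"
  shows "mult_vec_mat v (A * B) = mult_vec_mat (mult_vec_mat v A) B"
proof (rule eq_vecI)
  fix j assume "j < dim_vec (mult_vec_mat (mult_vec_mat v A) B)"
  with assms have "j < n" by (simp add: mult_vec_mat_def)
  with assms show "mult_vec_mat v (A * B) $ j = mult_vec_mat (mult_vec_mat v A) B $ j"
    by (simp add: mult_vec_mat_def assoc_scalar_prod[of v n A n "col B j"] del: col_mult2)
qed (use assms in \<open>simp add: mult_vec_mat_def\<close>)

lemma mult_vec_mat_one [simp]: "(v :: 'a::semiring_1 vec) \<in> carrier_vec n \<Longrightarrow> mult_vec_mat v (1\<^sub>m n) = v"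
  by (rule eq_vecI) (auto simp: mult_vec_mat_def)

lemma row_mult_eq_mult_vec_mat:
  "A \<in> carrier_mat n m \<Longrightarrow> B \<in> carrier_mat m k \<Longrightarrow> i < n \<Longrightarrow> row (A * B) i = mult_vec_mat (row A i) B"
  by (simp add: mult_vec_mat_def)

lemma row_eq_mult_vec_mat_unit:
  "(A :: 'a::semiring_1 mat) \<in> carrier_mat n m \<Longrightarrow> i < n \<Longrightarrow> row A i = mult_vec_mat (unit_vec n i) A"
  by (rule eq_vecI) (auto simp: mult_vec_mat_def scalar_prod_left_unit[of _ n])

text \<open>Products of explicit matrices are evaluated by the simplifier on lists of rows.\<close>

fun row_comb :: "'a::semiring_0 list \<Rightarrow> 'a list list \<Rightarrow> 'a list" where
  "row_comb [x] (r # _) = map ((*) x) r"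
| "row_comb (x # xs) (r # rs) = map2 (+) (map ((*) x) r) (row_comb xs rs)"
| "row_comb _ _ = []"

lemma row_comb_Cons:
  "xs \<noteq> [] \<Longrightarrow> row_comb (x # xs) (r # rs) = map2 (+) (map ((*) x) r) (row_comb xs rs)"
  by (cases xs) simp_all

lemma length_row_comb:
  "xs \<noteq> [] \<Longrightarrow> length xs = length rs \<Longrightarrow> \<forall>r\<in>set rs. length r = n \<Longrightarrow> length (row_comb xs rs) = n"
proof (induction xs arbitrary: rs)
  case (Cons x xs)
  then show ?case by (cases rs; cases xs) (auto simp: row_comb_Cons)
qed simp

lemma nth_row_comb:
  assumes "xs \<noteq> []" "length xs = length rs" "\<forall>r\<in>set rs. length r = n" "j < n"
  shows "row_comb xs rs ! j = (\<Sum>k<length xs. xs ! k * rs ! k ! j)"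
  using assms(1-3)
proof (induction xs arbitrary: rs)
  case (Cons x xs)
  then obtain r rs' where rs: "rs = r # rs'" by (cases rs) auto
  show ?case
  proof (cases "xs = []")
    case True
    with Cons.prems rs assms(4) show ?thesis by simp
  next
    case False
    with Cons.prems rs have "length (row_comb xs rs') = n" by (simp add: length_row_comb)
    with False Cons.prems rs assms(4) have "row_comb (x # xs) rs ! j = x * r ! j + row_comb xs rs' ! j"
      by (simp add: row_comb_Cons)
    with False Cons rs show ?thesis
      by (simp add: sum.lessThan_Suc_shift del: sum.lessThan_Suc)
  qed
qed simp

lemma mult_vec_mat_of_rows_list:
  assumes "xs \<noteq> []" "length xs = length rs" "\<forall>r\<in>set rs. length r = n"
  shows "mult_vec_mat (vec_of_list xs) (mat_of_rows_list n rs) = vec_of_list (row_comb xs rs)"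
proof (rule eq_vecI)
  show dims: "dim_vec (mult_vec_mat (vec_of_list xs) (mat_of_rows_list n rs)) = dim_vec (vec_of_list (row_comb xs rs))"
    using assms length_row_comb[OF assms] by (simp add: mult_vec_mat_def mat_of_rows_list_def)
  fix j assume "j < dim_vec (vec_of_list (row_comb xs rs))"
  with dims have "j < n" by (simp add: mult_vec_mat_def mat_of_rows_list_def)
  with assms nth_row_comb[OF assms this] show "mult_vec_mat (vec_of_list xs) (mat_of_rows_list n rs) $ j = vec_of_list (row_comb xs rs) $ j"
    by (simp add: mult_vec_mat_def scalar_prod_def mat_of_rows_list_def vec_of_list_index
        atLeast0LessThan)
qed

lemma mat_of_rows_list_mult:
  assumes "B \<noteq> []" "length B = m" "\<forall>r\<in>set A. length r = m" "\<forall>r\<in>set B. length r = n"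
  shows "mat_of_rows_list m A * mat_of_rows_list n B = mat_of_rows_list n (map (\<lambda>r. row_comb r B) A)"
proof (rule eq_matI)
  fix i j assume "i < dim_row (mat_of_rows_list n (map (\<lambda>r. row_comb r B) A))"
    "j < dim_col (mat_of_rows_list n (map (\<lambda>r. row_comb r B) A))"
  then have ij: "i < length A" "j < n" by (simp_all add: mat_of_rows_list_def)
  with assms have "A ! i \<noteq> []" "length (A ! i) = length B" by (metis length_0_conv nth_mem)+
  with assms ij nth_row_comb[OF this assms(4) ij(2)] show "(mat_of_rows_list m A * mat_of_rows_list n B) $$ (i, j) =
      mat_of_rows_list n (map (\<lambda>r. row_comb r B) A) $$ (i, j)"
    by (simp add: mat_of_rows_list_def scalar_prod_def atLeast0LessThan)
qed (simp_all add: mat_of_rows_list_def)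

lemma mat_of_rows_list_add:
  assumes "length A = length B" "\<forall>r\<in>set A. length r = n" "\<forall>r\<in>set B. length r = n"
  shows "mat_of_rows_list n A + mat_of_rows_list n B = mat_of_rows_list n (map2 (map2 (+)) A B)"
  by (rule eq_matI) (use assms in \<open>auto simp: mat_of_rows_list_def\<close>)

lemma mat_eq_mat_of_rows_list:
  "mat n m f = mat_of_rows_list m (map (\<lambda>i. map (\<lambda>j. f (i, j)) [0..<m]) [0..<n])"
  by (rule eq_matI) (simp_all add: mat_of_rows_list_def)

lemma vec_eq_vec_of_list: "vec n f = vec_of_list (map f [0..<n])"
  by (metis list_of_vec_vec vec_list)

lemma mat_of_rows_list_carrier [simp]: "length rs = m \<Longrightarrow> mat_of_rows_list n rs \<in> carrier_mat m n"
  by (simp add: mat_of_rows_list_def)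

lemma vec_of_list_eq_iff [simp]: "vec_of_list xs = vec_of_list ys \<longleftrightarrow> xs = ys"
  using list_vec by metis

lemma vec_of_list_carrier [simp]: "vec_of_list xs \<in> carrier_vec n \<longleftrightarrow> length xs = n"
  unfolding carrier_vec_def by simp

lemma upt_0_8: "[0..<8] = [0::nat, 1, 2, 3, 4, 5, 6, 7]"
  by (simp add: upt_rec)

lemma mat_eq_if_left_inverse:
  fixes N M A B :: "'a::semiring_1 mat"
  assumes "N * M = 1\<^sub>m n" "N \<in> carrier_mat n n" "M \<in> carrier_mat n n"
    and "A \<in> carrier_mat n m" "B \<in> carrier_mat n m" "M * A = M * B"
  shows "A = B"
proof -
  have "A = (N * M) * A" using assms(1) left_mult_one_mat[OF assms(4)] by simp
  also have "\<dots> = N * (M * A)" by (rule assoc_mult_mat[OF assms(2-4)])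
  also have "\<dots> = (N * M) * B" using assms(6) assoc_mult_mat[OF assms(2,3,5)] by simp
  finally show ?thesis using assms(1) left_mult_one_mat[OF assms(5)] by simp
qed

lemma compression_eq:
  fixes R L A B :: "'a::semiring_1 mat"
  assumes R: "R \<in> carrier_mat n k" and L: "L \<in> carrier_mat k n" and LR: "L * R = 1\<^sub>m k"
    and A: "A \<in> carrier_mat n n" and B: "B \<in> carrier_mat k k" and AR: "A * R = R * B"
  shows "L * A * R = B"
proof -
  have "L * A * R = L * (R * B)" by (simp add: assoc_mult_mat[OF L A R] AR)
  also have "\<dots> = (L * R) * B" by (rule assoc_mult_mat[OF L R B, symmetric])
  finally show ?thesis by (simp add: LR left_mult_one_mat[OF B])
qed

lemma eq_if_compressions_eq:
  fixes R L U N A A' :: "'a::comm_ring_1 mat"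
  assumes R: "R \<in> carrier_mat n k" and L: "L \<in> carrier_mat k n"
    and U: "U \<in> carrier_mat n m" and N: "N \<in> carrier_mat m n"
    and split: "R * L + U * N = 1\<^sub>m n"
    and A: "A \<in> carrier_mat n n" "A * U = U" and A': "A' \<in> carrier_mat n n" "A' * U = U"
    and eq: "A * R = A' * R"
  shows "A = A'"
proof -
  have expand: "X = (X * R) * L + U * N" if X: "X \<in> carrier_mat n n" and XU: "X * U = U" for X
  proof -
    have "X = X * (R * L + U * N)" using split X by simp
    also have "\<dots> = X * (R * L) + X * (U * N)"
      by (rule mult_add_distrib_mat[OF X mult_carrier_mat[OF R L] mult_carrier_mat[OF U N]])
    also have "\<dots> = (X * R) * L + U * N"
      by (simp add: assoc_mult_mat[OF X R L] assoc_mult_mat[OF X U N, symmetric] XU)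
    finally show ?thesis .
  qed
  show ?thesis using expand[OF A] expand[OF A'] eq by simp
qed

lemma GLm_simps [simp]:
  "mult (GLm n) = (*)" "one (GLm n) = 1\<^sub>m n" "carrier (GLm n) = {A \<in> carrier_mat n n. invertible_mat A}"
  by (simp_all add: GLm_def)

lemma gen_grp_simps [simp]:
  "mult (gen_grp n S) = (*)" "one (gen_grp n S) = 1\<^sub>m n" "carrier (gen_grp n S) = generate (GLm n) S"
  by (simp_all add: gen_grp_def GLm_def)

lemma m_inv_GLm:
  assumes A: "A \<in> carrier_mat n n" and B: "B \<in> carrier_mat n n"
    and AB: "A * B = 1\<^sub>m n" and BA: "B * A = 1\<^sub>m n"
  shows "inv\<^bsub>GLm n\<^esub> A = B"
  unfolding m_inv_def
proof (rule the_equality)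
  show "B \<in> carrier (GLm n) \<and> A \<otimes>\<^bsub>GLm n\<^esub> B = \<one>\<^bsub>GLm n\<^esub> \<and> B \<otimes>\<^bsub>GLm n\<^esub> A = \<one>\<^bsub>GLm n\<^esub>"
    using assms by (auto simp: invertible_mat_def inverts_mat_def square_mat.simps)
  fix C assume "C \<in> carrier (GLm n) \<and> A \<otimes>\<^bsub>GLm n\<^esub> C = \<one>\<^bsub>GLm n\<^esub> \<and> C \<otimes>\<^bsub>GLm n\<^esub> A = \<one>\<^bsub>GLm n\<^esub>"
  then have C: "C \<in> carrier_mat n n" "A * C = 1\<^sub>m n" by auto
  have "C = (B * A) * C" using BA C by simp
  also have "\<dots> = B * (A * C)" using A B C by (simp add: assoc_mult_mat)
  finally show "C = B" using B C by simp
qed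

lemma generate_GLm_subset:
  assumes "\<And>s. s \<in> S \<Longrightarrow> s \<in> M \<and> inv\<^bsub>GLm n\<^esub> s \<in> M" "1\<^sub>m n \<in> M"
    and "\<And>A B. A \<in> M \<Longrightarrow> B \<in> M \<Longrightarrow> A * B \<in> M"
  shows "generate (GLm n) S \<subseteq> M"
proof
  fix A assume "A \<in> generate (GLm n) S"
  then show "A \<in> M" by (induction rule: generate.induct) (use assms in auto)
qed

lemma generate_GLm_mult:
  "A \<in> generate (GLm n) S \<Longrightarrow> B \<in> generate (GLm n) S \<Longrightarrow> A * B \<in> generate (GLm n) S"
  using generate.eng[of A "GLm n" S B] by simp

primrec word_mat :: "nat \<Rightarrow> ('l \<Rightarrow> 'a::semiring_1 mat) \<Rightarrow> 'l list \<Rightarrow> 'a mat" where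
  "word_mat n f [] = 1\<^sub>m n"
| "word_mat n f (l # w) = f l * word_mat n f w"

context
  fixes n :: nat and f :: "'l \<Rightarrow> 'a::semiring_1 mat"
  assumes f_carrier: "\<And>l. f l \<in> carrier_mat n n"
begin

lemma word_mat_carrier [simp]: "word_mat n f w \<in> carrier_mat n n"
  by (induction w) (simp_all add: f_carrier mult_carrier_mat[of _ n n])

lemma word_mat_single [simp]: "word_mat n f [l] = f l"
  using right_mult_one_mat[OF f_carrier] by simp

lemma word_mat_append: "word_mat n f (u @ v) = word_mat n f u * word_mat n f v"
  by (induction u) (simp_all add: f_carrier assoc_mult_mat[of _ n n _ n _ n] left_mult_one_mat[of _ n n])

lemma word_mat_rev_mult:
  assumes "\<And>l. l \<in> set w \<Longrightarrow> f l * f l = 1\<^sub>m n"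
  shows "word_mat n f (rev w) * word_mat n f w = 1\<^sub>m n"
  using assms
proof (induction w)
  case (Cons l w)
  have "word_mat n f (rev (l # w)) * word_mat n f (l # w)
      = word_mat n f (rev w) * ((f l * f l) * word_mat n f w)"
    by (simp add: word_mat_append f_carrier assoc_mult_mat[of _ n n _ n _ n] right_mult_one_mat[of _ n n]
        mult_carrier_mat[of _ n n])
  also have "\<dots> = 1\<^sub>m n" using Cons by (simp add: left_mult_one_mat[of _ n n])
  finally show ?case .
qed simp

end

lemma m_inv_word_mat:
  assumes "\<And>l. f l \<in> carrier_mat n n" "\<And>l. f l * f l = 1\<^sub>m n"
  shows "inv\<^bsub>GLm n\<^esub> (word_mat n f w) = word_mat n f (rev w)"
  using word_mat_rev_mult[of f n w] word_mat_rev_mult[of f n "rev w"] assms by (simp add: m_inv_GLm)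

lemma generate_GLm_eq_words:
  fixes f :: "'l \<Rightarrow> complex mat"
  assumes f_carrier: "\<And>l. f l \<in> carrier_mat n n"
    and gens: "\<And>s. s \<in> S \<Longrightarrow> s \<in> word_mat n f ` lists A \<and> inv\<^bsub>GLm n\<^esub> s \<in> word_mat n f ` lists A"
    and letters: "f ` A \<subseteq> generate (GLm n) S"
  shows "generate (GLm n) S = word_mat n f ` lists A"
proof
  show "generate (GLm n) S \<subseteq> word_mat n f ` lists A"
  proof (rule generate_GLm_subset)
    show "1\<^sub>m n \<in> word_mat n f ` lists A" by (rule image_eqI[of _ _ "[]"]) simp_all
    fix B C assume "B \<in> word_mat n f ` lists A" "C \<in> word_mat n f ` lists A"
    then show "B * C \<in> word_mat n f ` lists A"
      by (auto simp: word_mat_append[OF f_carrier, symmetric] intro!: imageI)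
  qed (use gens in blast)
  show "word_mat n f ` lists A \<subseteq> generate (GLm n) S"
  proof
    fix B assume "B \<in> word_mat n f ` lists A"
    then obtain w where "w \<in> lists A" "B = word_mat n f w" by auto
    then show "B \<in> generate (GLm n) S"
    proof (induction w arbitrary: B)
      case Nil then show ?case using generate.one[of "GLm n" S] by simp
    next
      case (Cons l w)
      with letters have "f l \<in> generate (GLm n) S" by auto
      from generate.eng[OF this Cons.IH] Cons.prems show ?case by simp
    qed
  qed
qed

corollary generate_GLm_involutions:
  fixes f :: "'l \<Rightarrow> complex mat"
  assumes "\<And>l. f l \<in> carrier_mat n n" "\<And>l. f l * f l = 1\<^sub>m n"
  shows "generate (GLm n) (f ` A) = word_mat n f ` lists A"
proof (rule generate_GLm_eq_words)
  fix s assume "s \<in> f ` A"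
  then obtain l where l: "l \<in> A" "s = f l" by auto
  then have "inv\<^bsub>GLm n\<^esub> s = s" using assms by (simp add: m_inv_GLm)
  with l assms(1)[of l] show "s \<in> word_mat n f ` lists A \<and> inv\<^bsub>GLm n\<^esub> s \<in> word_mat n f ` lists A"
    by (auto intro!: image_eqI[of _ _ "[l]"])
qed (auto intro: generate.incl assms(1))

datatype letter = S1 | S2 | S3 | S4 | S5 | S6 | S3'

primrec letter_mat :: "letter \<Rightarrow> complex mat" where
  "letter_mat S1 = s1" | "letter_mat S2 = s2" | "letter_mat S3 = s3" | "letter_mat S4 = s4"
| "letter_mat S5 = s5" | "letter_mat S6 = s6" | "letter_mat S3' = s3'"

abbreviation hword :: "letter list \<Rightarrow> complex mat" where
  "hword \<equiv> word_mat 8 letter_mat"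

lemma tmat_carrier [simp]: "tmat n i j \<in> carrier_mat n n"
  by (simp add: tmat_def)

lemma Xm_carrier [simp]: "Xm \<in> carrier_mat 8 8"
  by (simp add: Xm_def)

lemma Ym_carrier [simp]: "Ym \<in> carrier_mat 8 8"
  by (simp add: Ym_def)

lemma letter_mat_carrier [simp]: "letter_mat l \<in> carrier_mat 8 8"
  by (cases l) (simp_all add: s1_def s2_def s3_def s4_def s5_def s6_def s3'_def mult_carrier_mat[of _ 8 8])

lemma mult_vec_mat_tmat:
  assumes "v \<in> carrier_vec n" "i - 1 < n" "j - 1 < n"
  shows "mult_vec_mat v (tmat n i j) =
    vec n (\<lambda>k. v $ (if k = i - 1 then j - 1 else if k = j - 1 then i - 1 else k))"
proof (rule eq_vecI)
  define \<sigma> where "\<sigma> k = (if k = i - 1 then j - 1 else if k = j - 1 then i - 1 else k)" for k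
  have \<sigma>_eq: "\<sigma> r = k \<longleftrightarrow> r = \<sigma> k" for r k by (auto simp: \<sigma>_def)
  fix k assume "k < dim_vec (vec n (\<lambda>k. v $ \<sigma> k))"
  then have k: "k < n" by simp
  then have "\<sigma> k < n" using assms by (simp add: \<sigma>_def)
  have "mult_vec_mat v (tmat n i j) $ k = (\<Sum>r\<in>{0..<n}. v $ r * (if \<sigma> r = k then 1 else 0))"
    using assms k by (simp add: mult_vec_mat_def tmat_def scalar_prod_def \<sigma>_def)
  also have "\<dots> = v $ \<sigma> k"
    using \<open>\<sigma> k < n\<close> by (simp add: \<sigma>_eq if_distrib cong: if_cong)
  finally show "mult_vec_mat v (tmat n i j) $ k = vec n (\<lambda>k. v $ \<sigma> k) $ k"
    using k by simp
qed (simp add: mult_vec_mat_def tmat_def)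

section \<open>The 56 labels \<open>\<plusminus>v(i,j)\<close>\<close>

datatype ipair =
    I01 | I02 | I03 | I04 | I05 | I06 | I07 | I12 | I13 | I14 | I15 | I16 | I17 | I23
    | I24 | I25 | I26 | I27 | I34 | I35 | I36 | I37 | I45 | I46 | I47 | I56 | I57 | I67

datatype vlabel = Pos ipair | Neg ipair

primrec ipair_idx :: "ipair \<Rightarrow> nat \<times> nat" where
  "ipair_idx I01 = (0, 1)" | "ipair_idx I02 = (0, 2)" | "ipair_idx I03 = (0, 3)"
  | "ipair_idx I04 = (0, 4)" | "ipair_idx I05 = (0, 5)" | "ipair_idx I06 = (0, 6)"
  | "ipair_idx I07 = (0, 7)" | "ipair_idx I12 = (1, 2)" | "ipair_idx I13 = (1, 3)"
  | "ipair_idx I14 = (1, 4)" | "ipair_idx I15 = (1, 5)" | "ipair_idx I16 = (1, 6)"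
  | "ipair_idx I17 = (1, 7)" | "ipair_idx I23 = (2, 3)" | "ipair_idx I24 = (2, 4)"
  | "ipair_idx I25 = (2, 5)" | "ipair_idx I26 = (2, 6)" | "ipair_idx I27 = (2, 7)"
  | "ipair_idx I34 = (3, 4)" | "ipair_idx I35 = (3, 5)" | "ipair_idx I36 = (3, 6)"
  | "ipair_idx I37 = (3, 7)" | "ipair_idx I45 = (4, 5)" | "ipair_idx I46 = (4, 6)"
  | "ipair_idx I47 = (4, 7)" | "ipair_idx I56 = (5, 6)" | "ipair_idx I57 = (5, 7)"
  | "ipair_idx I67 = (6, 7)"

definition x_coord :: "nat \<Rightarrow> nat" where
  "x_coord k = [1, 7, 6, 5, 4, 3, 2, 0] ! k"

text \<open>For ipair_idx q = (i, j), label_row (Pos q) and label_row (Neg q) are the coefficient rows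
  of the forms x_i + x_j - x_7 and 1 + x_7 - x_i - x_j on W, where 1 = (b + c + \<dots> + h - 3a) / 2.\<close>

definition pos_row :: "nat \<Rightarrow> nat \<Rightarrow> complex vec" where
  "pos_row i j = vec 8 (\<lambda>k. of_bool (k = x_coord i) + of_bool (k = x_coord j) - of_bool (k = x_coord 7))"

definition neg_row :: "nat \<Rightarrow> nat \<Rightarrow> complex vec" where
  "neg_row i j = vec 8 (\<lambda>k. (if k = 0 then - 3 / 2 else 1 / 2) - pos_row i j $ k)"

fun label_row :: "vlabel \<Rightarrow> complex vec" where
  "label_row (Pos q) = case_prod pos_row (ipair_idx q)"
| "label_row (Neg q) = case_prod neg_row (ipair_idx q)"

lemma label_row_carrier [simp]: "label_row p \<in> carrier_vec 8"
  by (cases p) (simp_all add: pos_row_def neg_row_def split: prod.split)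

lemma dim_label_row [simp]: "dim_vec (label_row p) = 8"
  using label_row_carrier[of p] by (simp only: carrier_vec_def mem_Collect_eq)

text \<open>s1, \<dots>, s6 permute the indices of the coordinates x0, \<dots>, x7 by the transpositions
  (6 7), (6 5), (5 4), (4 3), (3 2), (2 1); s3' exchanges v(a,b) with -v(c,d) when
  {a,b,c,d} is {0,1,2,3} or {4,5,6,7}.\<close>

primrec index_swap :: "letter \<Rightarrow> ipair \<Rightarrow> ipair" where
  "index_swap S1 q = (case q of
      I06 \<Rightarrow> I07 | I07 \<Rightarrow> I06 | I16 \<Rightarrow> I17 | I17 \<Rightarrow> I16 | I26 \<Rightarrow> I27 | I27 \<Rightarrow> I26
      | I36 \<Rightarrow> I37 | I37 \<Rightarrow> I36 | I46 \<Rightarrow> I47 | I47 \<Rightarrow> I46 | I56 \<Rightarrow> I57 | I57 \<Rightarrow> I56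
      | _ \<Rightarrow> q)"
| "index_swap S2 q = (case q of
      I05 \<Rightarrow> I06 | I06 \<Rightarrow> I05 | I15 \<Rightarrow> I16 | I16 \<Rightarrow> I15 | I25 \<Rightarrow> I26 | I26 \<Rightarrow> I25
      | I35 \<Rightarrow> I36 | I36 \<Rightarrow> I35 | I45 \<Rightarrow> I46 | I46 \<Rightarrow> I45 | I57 \<Rightarrow> I67 | I67 \<Rightarrow> I57
      | _ \<Rightarrow> q)"
| "index_swap S3 q = (case q of
      I04 \<Rightarrow> I05 | I05 \<Rightarrow> I04 | I14 \<Rightarrow> I15 | I15 \<Rightarrow> I14 | I24 \<Rightarrow> I25 | I25 \<Rightarrow> I24
      | I34 \<Rightarrow> I35 | I35 \<Rightarrow> I34 | I46 \<Rightarrow> I56 | I56 \<Rightarrow> I46 | I47 \<Rightarrow> I57 | I57 \<Rightarrow> I47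
      | _ \<Rightarrow> q)"
| "index_swap S4 q = (case q of
      I03 \<Rightarrow> I04 | I04 \<Rightarrow> I03 | I13 \<Rightarrow> I14 | I14 \<Rightarrow> I13 | I23 \<Rightarrow> I24 | I24 \<Rightarrow> I23
      | I35 \<Rightarrow> I45 | I45 \<Rightarrow> I35 | I36 \<Rightarrow> I46 | I46 \<Rightarrow> I36 | I37 \<Rightarrow> I47 | I47 \<Rightarrow> I37
      | _ \<Rightarrow> q)"
| "index_swap S5 q = (case q of
      I02 \<Rightarrow> I03 | I03 \<Rightarrow> I02 | I12 \<Rightarrow> I13 | I13 \<Rightarrow> I12 | I24 \<Rightarrow> I34 | I34 \<Rightarrow> I24
      | I25 \<Rightarrow> I35 | I35 \<Rightarrow> I25 | I26 \<Rightarrow> I36 | I36 \<Rightarrow> I26 | I27 \<Rightarrow> I37 | I37 \<Rightarrow> I27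
      | _ \<Rightarrow> q)"
| "index_swap S6 q = (case q of
      I01 \<Rightarrow> I02 | I02 \<Rightarrow> I01 | I13 \<Rightarrow> I23 | I23 \<Rightarrow> I13 | I14 \<Rightarrow> I24 | I24 \<Rightarrow> I14
      | I15 \<Rightarrow> I25 | I25 \<Rightarrow> I15 | I16 \<Rightarrow> I26 | I26 \<Rightarrow> I16 | I17 \<Rightarrow> I27 | I27 \<Rightarrow> I17
      | _ \<Rightarrow> q)"
| "index_swap S3' q = q"

primrec X_swap :: "vlabel \<Rightarrow> vlabel" where
  "X_swap (Pos q) = (case q of
      I01 \<Rightarrow> Neg I23 | I02 \<Rightarrow> Neg I13 | I03 \<Rightarrow> Neg I12 | I12 \<Rightarrow> Neg I03
      | I13 \<Rightarrow> Neg I02 | I23 \<Rightarrow> Neg I01 | I45 \<Rightarrow> Neg I67 | I46 \<Rightarrow> Neg I57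
      | I47 \<Rightarrow> Neg I56 | I56 \<Rightarrow> Neg I47 | I57 \<Rightarrow> Neg I46 | I67 \<Rightarrow> Neg I45
      | _ \<Rightarrow> Pos q)"
| "X_swap (Neg q) = (case q of
      I01 \<Rightarrow> Pos I23 | I02 \<Rightarrow> Pos I13 | I03 \<Rightarrow> Pos I12 | I12 \<Rightarrow> Pos I03
      | I13 \<Rightarrow> Pos I02 | I23 \<Rightarrow> Pos I01 | I45 \<Rightarrow> Pos I67 | I46 \<Rightarrow> Pos I57
      | I47 \<Rightarrow> Pos I56 | I56 \<Rightarrow> Pos I47 | I57 \<Rightarrow> Pos I46 | I67 \<Rightarrow> Pos I45
      | _ \<Rightarrow> Neg q)"

definition act :: "letter \<Rightarrow> vlabel \<Rightarrow> vlabel" where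
  "act l p = (if l = S3' then X_swap p
              else case p of Pos q \<Rightarrow> Pos (index_swap l q) | Neg q \<Rightarrow> Neg (index_swap l q))"

lemmas label_row_eval = pos_row_def neg_row_def x_coord_def vec_eq_vec_of_list upt_0_8 vec_of_list_index

lemma label_row_act: "mult_vec_mat (label_row p) (letter_mat l) = label_row (act l p)"
  by (cases l; cases p; rename_tac q; case_tac q)
    (simp_all add: act_def s1_def s2_def s3_def s4_def s5_def s6_def s3'_def Xm_def Ym_def
      mult_vec_mat_mult[of _ 8] mult_vec_mat_tmat mult_vec_mat_of_rows_list label_row_eval
      del: vec_of_list_Cons)

definition act_word :: "letter list \<Rightarrow> vlabel \<Rightarrow> vlabel" where
  "act_word w p = foldl (\<lambda>p l. act l p) p w"

lemma act_word_simps [simp]: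
  "act_word [] p = p" "act_word (l # w) p = act_word w (act l p)" "act_word (u @ v) p = act_word v (act_word u p)"
  by (simp_all add: act_word_def)

lemma label_row_hword: "mult_vec_mat (label_row p) (hword w) = label_row (act_word w p)"
proof (induction w arbitrary: p)
  case (Cons l w)
  have "mult_vec_mat (label_row p) (hword (l # w))
      = mult_vec_mat (mult_vec_mat (label_row p) (letter_mat l)) (hword w)"
    by (simp add: mult_vec_mat_mult[of _ 8])
  also have "\<dots> = label_row (act_word (l # w) p)"
    by (simp only: label_row_act Cons.IH act_word_simps)
  finally show ?case .
qed simp

lemma act_act [simp]: "act l (act l p) = p"
  by (cases l; cases p; rename_tac q; case_tac q) (simp_all add: act_def)

lemma act_word_rev [simp]: "act_word (rev w) (act_word w p) = p"
  by (induction w arbitrary: p) simp_all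

section \<open>Words are determined by their action on eight labels\<close>

text \<open>The rows of these labels are e1 + e7 - e0, e1, \<dots>, e7; the matrix in the next lemma is the
  inverse of the matrix they form.\<close>

definition basis_labels :: "vlabel list" where
  "basis_labels = [Pos I01, Pos I07, Pos I67, Pos I57, Pos I47, Pos I37, Pos I27, Pos I17]"

lemma basis_left_inverse:
  "mat_of_rows_list 8 [[-1, 1, 0, 0, 0, 0, 0, 1], [0, 1, 0, 0, 0, 0, 0, 0], [0, 0, 1, 0, 0, 0, 0, 0],
     [0, 0, 0, 1, 0, 0, 0, 0], [0, 0, 0, 0, 1, 0, 0, 0], [0, 0, 0, 0, 0, 1, 0, 0],
     [0, 0, 0, 0, 0, 0, 1, 0], [0, 0, 0, 0, 0, 0, 0, 1]]
   * mat 8 8 (\<lambda>(i, j). label_row (basis_labels ! i) $ j) = 1\<^sub>m 8"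
  by (simp add: mat_eq_mat_of_rows_list[of 8 8] one_mat_def mat_of_rows_list_mult basis_labels_def
      label_row_eval del: vec_of_list_Cons)

lemma mat_eq_by_basis_labels:
  assumes "A \<in> carrier_mat 8 8" "B \<in> carrier_mat 8 8"
    and "\<And>b. b \<in> set basis_labels \<Longrightarrow> mult_vec_mat (label_row b) A = mult_vec_mat (label_row b) B"
  shows "A = B"
proof (rule mat_eq_if_left_inverse[OF basis_left_inverse])
  define M :: "complex mat" where "M = mat 8 8 (\<lambda>(i, j). label_row (basis_labels ! i) $ j)"
  have M: "M \<in> carrier_mat 8 8" by (simp add: M_def)
  have row_M: "row M i = label_row (basis_labels ! i)" if "i < 8" for i
    using that by (auto simp: M_def intro!: eq_vecI)
  show "M * A = M * B" unfolding M_def[symmetric]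
  proof (rule eq_rowI)
    fix i assume "i < dim_row (M * B)"
    then have "i < 8" by (simp add: M_def)
    moreover have "basis_labels ! i \<in> set basis_labels"
      using \<open>i < 8\<close> by (intro nth_mem) (simp add: basis_labels_def)
    ultimately show "row (M * A) i = row (M * B) i"
      using assms row_M[OF \<open>i < 8\<close>] row_mult_eq_mult_vec_mat[OF M _ \<open>i < 8\<close>] by simp
  qed (use assms in \<open>simp_all add: M_def\<close>)
qed (use assms in simp_all)

lemma hword_eqI: "list_all (\<lambda>b. act_word u b = act_word v b) basis_labels \<Longrightarrow> hword u = hword v"
proof (rule mat_eq_by_basis_labels)
  fix b assume "list_all (\<lambda>b. act_word u b = act_word v b) basis_labels" "b \<in> set basis_labels"
  then show "mult_vec_mat (label_row b) (hword u) = mult_vec_mat (label_row b) (hword v)"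
    by (simp add: label_row_hword list_all_iff)
qed simp_all

lemma letter_mat_involution: "letter_mat l * letter_mat l = 1\<^sub>m 8"
  using hword_eqI[of "[l, l]" "[]"] by (simp add: right_mult_one_mat[of _ 8 8] list_all_iff)

definition G_letters :: "letter set" where
  "G_letters = {S2, S3, S4, S5, S6, S3'}"

definition Q_letters :: "letter set" where
  "Q_letters = {S1, S2, S3, S4, S5, S3'}"

lemma carrier_Ggrp: "carrier Ggrp = hword ` lists G_letters"
proof -
  have "{s2, s3, s4, s5, s6, s3'} = letter_mat ` G_letters" by (simp add: G_letters_def)
  then show ?thesis
    unfolding Ggrp_def by (simp add: generate_GLm_involutions letter_mat_involution)
qed

lemma carrier_Qgrp: "carrier Qgrp = hword ` lists Q_letters"
proof -
  have "{s1, s2, s3, s4, s5, s3'} = letter_mat ` Q_letters" by (simp add: Q_letters_def)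
  then show ?thesis
    unfolding Qgrp_def by (simp add: generate_GLm_involutions letter_mat_involution)
qed

lemma hword_carrier [simp]: "hword w \<in> carrier_mat 8 8"
  by simp

lemma hword_append: "hword (u @ v) = hword u * hword v"
  by (rule word_mat_append) simp

lemma hword_append_cong: "hword u = hword u' \<Longrightarrow> hword v = hword v' \<Longrightarrow> hword (u @ v) = hword (u' @ v')"
  by (simp add: hword_append)

lemma hword_rev_mult: "hword (rev w) * hword w = 1\<^sub>m 8"
  by (rule word_mat_rev_mult) (simp_all add: letter_mat_involution)

lemma hword_rev_cancel: "hword (rev u @ u @ v) = hword v"
  using hword_append[of "rev u @ u" v] hword_rev_mult[of u] by (simp add: hword_append left_mult_one_mat[of _ 8 8])

text \<open>(23) is a conjugate of s1; together with Y = s1 (23) this shows that H is generated by its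
  Coxeter generators.\<close>

definition word_23 :: "letter list" where
  "word_23 = [S3', S4, S5, S3, S4, S3', S6, S5, S4, S3, S2, S1, S2, S3, S4, S5, S6, S3', S4, S3, S5, S4, S3']"

lemma tmat_23_eq_hword: "tmat 8 2 3 = hword word_23"
proof (rule mat_eq_by_basis_labels)
  have "list_all (\<lambda>b. mult_vec_mat (label_row b) (tmat 8 2 3) = label_row (act_word word_23 b)) basis_labels"
    by (simp add: basis_labels_def word_23_def act_def mult_vec_mat_tmat label_row_eval
        del: vec_of_list_Cons)
  then show "mult_vec_mat (label_row b) (tmat 8 2 3) = mult_vec_mat (label_row b) (hword word_23)"
    if "b \<in> set basis_labels" for b
    using that by (simp add: label_row_hword list_all_iff)
qed simp_all

lemma Ym_eq_hword: "Ym = hword (S1 # word_23)"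
proof -
  have "rev word_23 = word_23" by (simp add: word_23_def)
  then have T: "tmat 8 2 3 * tmat 8 2 3 = 1\<^sub>m 8"
    using hword_rev_mult[of word_23] by (simp add: tmat_23_eq_hword)
  have "Ym = Ym * (tmat 8 2 3 * tmat 8 2 3)" by (simp add: T right_mult_one_mat[of _ 8 8])
  also have "\<dots> = s1 * tmat 8 2 3" by (simp add: s1_def assoc_mult_mat[of _ 8 8 _ 8 _ 8])
  finally show ?thesis by (simp add: tmat_23_eq_hword)
qed

lemma carrier_Hgrp: "carrier Hgrp = range hword"
proof -
  let ?S = "{tmat 8 2 3, tmat 8 3 4, tmat 8 4 5, tmat 8 5 6, tmat 8 6 7, tmat 8 7 8, Xm, Ym}"
  have gens: "?S = hword ` {word_23, [S2], [S3], [S4], [S5], [S6], [S3'], S1 # word_23}"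
    by (simp add: tmat_23_eq_hword Ym_eq_hword s2_def s3_def s4_def s5_def s6_def s3'_def
        right_mult_one_mat[of _ 8 8])
  have "generate (GLm 8) ?S = hword ` lists UNIV"
  proof (rule generate_GLm_eq_words)
    fix s assume "s \<in> ?S"
    then obtain w where "s = hword w" unfolding gens by blast
    then show "s \<in> hword ` lists UNIV \<and> inv\<^bsub>GLm 8\<^esub> s \<in> hword ` lists UNIV"
      by (simp add: m_inv_word_mat letter_mat_involution)
  next
    have "s1 \<in> generate (GLm 8) ?S"
      unfolding s1_def by (intro generate_GLm_mult generate.incl) simp_all
    moreover have "letter_mat l \<in> generate (GLm 8) ?S" if "l \<noteq> S1" for l
      using that by (cases l) (simp_all add: s2_def s3_def s4_def s5_def s6_def s3'_def generate.incl)
    ultimately show "letter_mat ` UNIV \<subseteq> generate (GLm 8) ?S"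
      by (metis image_subsetI letter_mat.simps(1))
  qed simp
  then show ?thesis by (simp add: Hgrp_def)
qed

section \<open>G is the stabiliser of the second row\<close>

lemma G_letters_fix_base: "w \<in> lists G_letters \<Longrightarrow> act_word w (Pos I07) = Pos I07"
proof (induction w)
  case (Cons l w)
  then have "act l (Pos I07) = Pos I07" by (auto simp: G_letters_def act_def)
  with Cons show ?case by simp
qed simp

text \<open>A Schreier transversal for the action on labels: coset_word p moves Pos I07 to p, and
  coset_word p followed by l agrees with schreier_word p l, a word in the generators of G,
  followed by coset_word (act l p).\<close>

primrec coset_word :: "vlabel \<Rightarrow> letter list" where
  "coset_word (Pos q) = (case q of
      I01 \<Rightarrow> [S1, S2, S3, S4, S5, S6] | I02 \<Rightarrow> [S1, S2, S3, S4, S5]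
      | I03 \<Rightarrow> [S1, S2, S3, S4] | I04 \<Rightarrow> [S1, S2, S3]
      | I05 \<Rightarrow> [S1, S2] | I06 \<Rightarrow> [S1] | I07 \<Rightarrow> []
      | I12 \<Rightarrow> [S1, S2, S3, S4, S5, S6, S3', S4, S3, S2, S1, S5, S4, S3, S2, S3', S4, S3, S5, S4, S6, S5]
      | I13 \<Rightarrow> [S1, S2, S3, S4, S5, S6, S3', S4, S3, S2, S1, S5, S4, S3, S2, S3', S4, S3, S5, S4, S6]
      | I14 \<Rightarrow> [S1, S2, S3, S4, S5, S6, S3', S4, S3, S2, S1, S5, S4, S3, S2, S3', S4, S3, S5, S6]
      | I15 \<Rightarrow> [S1, S2, S3, S4, S5, S6, S3', S4, S3, S2, S1, S5, S4, S3, S2, S3', S4, S5, S6]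
      | I16 \<Rightarrow> [S1, S2, S3, S4, S5, S6, S3', S4, S3, S2, S1, S5, S4, S3, S3', S4, S5, S6]
      | I17 \<Rightarrow> [S1, S2, S3, S4, S5, S6, S3', S4, S3, S2, S5, S4, S3, S3', S4, S5, S6]
      | I23 \<Rightarrow> [S1, S2, S3, S4, S5, S6, S3', S4, S3, S2, S1, S5, S4, S3, S2, S3', S4, S3, S5, S4]
      | I24 \<Rightarrow> [S1, S2, S3, S4, S5, S6, S3', S4, S3, S2, S1, S5, S4, S3, S2, S3', S4, S3, S5]
      | I25 \<Rightarrow> [S1, S2, S3, S4, S5, S6, S3', S4, S3, S2, S1, S5, S4, S3, S2, S3', S4, S5]
      | I26 \<Rightarrow> [S1, S2, S3, S4, S5, S6, S3', S4, S3, S2, S1, S5, S4, S3, S3', S4, S5]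
      | I27 \<Rightarrow> [S1, S2, S3, S4, S5, S6, S3', S4, S3, S2, S5, S4, S3, S3', S4, S5]
      | I34 \<Rightarrow> [S1, S2, S3, S4, S5, S6, S3', S4, S3, S2, S1, S5, S4, S3, S2, S3', S4, S3]
      | I35 \<Rightarrow> [S1, S2, S3, S4, S5, S6, S3', S4, S3, S2, S1, S5, S4, S3, S2, S3', S4]
      | I36 \<Rightarrow> [S1, S2, S3, S4, S5, S6, S3', S4, S3, S2, S1, S5, S4, S3, S3', S4]
      | I37 \<Rightarrow> [S1, S2, S3, S4, S5, S6, S3', S4, S3, S2, S5, S4, S3, S3', S4]
      | I45 \<Rightarrow> [S1, S2, S3, S4, S5, S6, S3', S4, S3, S2, S1, S5, S4, S3, S2, S3']
      | I46 \<Rightarrow> [S1, S2, S3, S4, S5, S6, S3', S4, S3, S2, S1, S5, S4, S3, S3']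
      | I47 \<Rightarrow> [S1, S2, S3, S4, S5, S6, S3', S4, S3, S2, S5, S4, S3, S3']
      | I56 \<Rightarrow> [S1, S2, S3, S4, S5, S6, S3', S4, S3, S2, S1, S5, S4, S3']
      | I57 \<Rightarrow> [S1, S2, S3, S4, S5, S6, S3', S4, S3, S2, S5, S4, S3']
      | I67 \<Rightarrow> [S1, S2, S3, S4, S5, S6, S3', S4, S3, S5, S4, S3'])"
| "coset_word (Neg q) = (case q of
      I01 \<Rightarrow> [S1, S2, S3, S4, S5, S6, S3', S4, S3, S2, S1, S5, S4, S3, S2, S3', S4, S3, S5, S4, S3']
      | I02 \<Rightarrow> [S1, S2, S3, S4, S5, S6, S3', S4, S3, S2, S1, S5, S4, S3, S2, S3', S4, S3, S5, S4, S6, S3']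
      | I03 \<Rightarrow> [S1, S2, S3, S4, S5, S6, S3', S4, S3, S2, S1, S5, S4, S3, S2, S3', S4, S3, S5, S4, S6, S5, S3']
      | I04 \<Rightarrow> [S1, S2, S3, S4, S5, S6, S3', S4, S3, S2, S1, S5, S4, S3, S2, S3', S4, S3, S5, S4, S6, S5, S3', S4]
      | I05 \<Rightarrow> [S1, S2, S3, S4, S5, S6, S3', S4, S3, S2, S1, S5, S4, S3, S2, S3', S4, S3, S5, S4, S6, S5, S3', S4, S3]
      | I06 \<Rightarrow> [S1, S2, S3, S4, S5, S6, S3', S4, S3, S2, S1, S5, S4, S3, S2, S3', S4, S3, S5, S4, S6, S5, S3', S4, S3, S2]
      | I07 \<Rightarrow> [S1, S2, S3, S4, S5, S6, S3', S4, S3, S2, S1, S5, S4, S3, S2, S3', S4, S3, S5, S4, S6, S5, S3', S4, S3, S2, S1]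
      | I12 \<Rightarrow> [S1, S2, S3, S4, S3'] | I13 \<Rightarrow> [S1, S2, S3, S4, S5, S3']
      | I14 \<Rightarrow> [S1, S2, S3, S4, S5, S3', S4]
      | I15 \<Rightarrow> [S1, S2, S3, S4, S5, S3', S4, S3]
      | I16 \<Rightarrow> [S1, S2, S3, S4, S5, S3', S4, S3, S2]
      | I17 \<Rightarrow> [S1, S2, S3, S4, S5, S3', S4, S3, S2, S1]
      | I23 \<Rightarrow> [S1, S2, S3, S4, S5, S6, S3']
      | I24 \<Rightarrow> [S1, S2, S3, S4, S5, S6, S3', S4]
      | I25 \<Rightarrow> [S1, S2, S3, S4, S5, S6, S3', S4, S3]
      | I26 \<Rightarrow> [S1, S2, S3, S4, S5, S6, S3', S4, S3, S2]
      | I27 \<Rightarrow> [S1, S2, S3, S4, S5, S6, S3', S4, S3, S2, S1]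
      | I34 \<Rightarrow> [S1, S2, S3, S4, S5, S6, S3', S4, S5]
      | I35 \<Rightarrow> [S1, S2, S3, S4, S5, S6, S3', S4, S3, S5]
      | I36 \<Rightarrow> [S1, S2, S3, S4, S5, S6, S3', S4, S3, S2, S5]
      | I37 \<Rightarrow> [S1, S2, S3, S4, S5, S6, S3', S4, S3, S2, S1, S5]
      | I45 \<Rightarrow> [S1, S2, S3, S4, S5, S6, S3', S4, S3, S5, S4]
      | I46 \<Rightarrow> [S1, S2, S3, S4, S5, S6, S3', S4, S3, S2, S5, S4]
      | I47 \<Rightarrow> [S1, S2, S3, S4, S5, S6, S3', S4, S3, S2, S1, S5, S4]
      | I56 \<Rightarrow> [S1, S2, S3, S4, S5, S6, S3', S4, S3, S2, S5, S4, S3]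
      | I57 \<Rightarrow> [S1, S2, S3, S4, S5, S6, S3', S4, S3, S2, S1, S5, S4, S3]
      | I67 \<Rightarrow> [S1, S2, S3, S4, S5, S6, S3', S4, S3, S2, S1, S5, S4, S3, S2])"

primrec schreier_word :: "vlabel \<Rightarrow> letter \<Rightarrow> letter list" where
  "schreier_word (Pos q) l = (case (q, l) of
      (I01, S1) \<Rightarrow> [S2] | (I01, S2) \<Rightarrow> [S3] | (I01, S3) \<Rightarrow> [S4]
      | (I01, S4) \<Rightarrow> [S5] | (I01, S5) \<Rightarrow> [S6] | (I02, S1) \<Rightarrow> [S2]
      | (I02, S2) \<Rightarrow> [S3] | (I02, S3) \<Rightarrow> [S4] | (I02, S4) \<Rightarrow> [S5]
      | (I03, S1) \<Rightarrow> [S2] | (I03, S2) \<Rightarrow> [S3] | (I03, S3) \<Rightarrow> [S4]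
      | (I03, S6) \<Rightarrow> [S6] | (I04, S1) \<Rightarrow> [S2] | (I04, S2) \<Rightarrow> [S3]
      | (I04, S5) \<Rightarrow> [S5] | (I04, S6) \<Rightarrow> [S6] | (I04, S3') \<Rightarrow> [S3']
      | (I05, S1) \<Rightarrow> [S2] | (I05, S4) \<Rightarrow> [S4] | (I05, S5) \<Rightarrow> [S5]
      | (I05, S6) \<Rightarrow> [S6] | (I05, S3') \<Rightarrow> [S3'] | (I06, S3) \<Rightarrow> [S3]
      | (I06, S4) \<Rightarrow> [S4] | (I06, S5) \<Rightarrow> [S5] | (I06, S6) \<Rightarrow> [S6]
      | (I06, S3') \<Rightarrow> [S3'] | (I07, S2) \<Rightarrow> [S2] | (I07, S3) \<Rightarrow> [S3]
      | (I07, S4) \<Rightarrow> [S4] | (I07, S5) \<Rightarrow> [S5] | (I07, S6) \<Rightarrow> [S6]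
      | (I07, S3') \<Rightarrow> [S3'] | (I12, S1) \<Rightarrow> [S6] | (I12, S2) \<Rightarrow> [S5]
      | (I12, S3) \<Rightarrow> [S4] | (I12, S4) \<Rightarrow> [S3'] | (I12, S6) \<Rightarrow> [S2]
      | (I13, S1) \<Rightarrow> [S6] | (I13, S2) \<Rightarrow> [S5] | (I13, S3) \<Rightarrow> [S4]
      | (I14, S1) \<Rightarrow> [S6] | (I14, S2) \<Rightarrow> [S5] | (I14, S5) \<Rightarrow> [S3']
      | (I14, S3') \<Rightarrow> [S3] | (I15, S1) \<Rightarrow> [S6] | (I15, S4) \<Rightarrow> [S4]
      | (I15, S5) \<Rightarrow> [S3'] | (I15, S3') \<Rightarrow> [S3] | (I16, S3) \<Rightarrow> [S5]
      | (I16, S4) \<Rightarrow> [S4] | (I16, S5) \<Rightarrow> [S3'] | (I16, S3') \<Rightarrow> [S3]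
      | (I17, S2) \<Rightarrow> [S6] | (I17, S3) \<Rightarrow> [S5] | (I17, S4) \<Rightarrow> [S4]
      | (I17, S5) \<Rightarrow> [S3'] | (I17, S3') \<Rightarrow> [S3] | (I23, S1) \<Rightarrow> [S6]
      | (I23, S2) \<Rightarrow> [S5] | (I23, S3) \<Rightarrow> [S4] | (I23, S5) \<Rightarrow> [S2]
      | (I24, S1) \<Rightarrow> [S6] | (I24, S2) \<Rightarrow> [S5] | (I24, S3') \<Rightarrow> [S3]
      | (I25, S1) \<Rightarrow> [S6] | (I25, S4) \<Rightarrow> [S4] | (I25, S3') \<Rightarrow> [S3]
      | (I26, S3) \<Rightarrow> [S5] | (I26, S4) \<Rightarrow> [S4] | (I26, S3') \<Rightarrow> [S3]
      | (I27, S2) \<Rightarrow> [S6] | (I27, S3) \<Rightarrow> [S5] | (I27, S4) \<Rightarrow> [S4]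
      | (I27, S3') \<Rightarrow> [S3] | (I34, S1) \<Rightarrow> [S6] | (I34, S2) \<Rightarrow> [S5]
      | (I34, S4) \<Rightarrow> [S2] | (I34, S6) \<Rightarrow> [S3'] | (I34, S3') \<Rightarrow> [S3]
      | (I35, S1) \<Rightarrow> [S6] | (I35, S6) \<Rightarrow> [S3'] | (I35, S3') \<Rightarrow> [S3]
      | (I36, S3) \<Rightarrow> [S5] | (I36, S6) \<Rightarrow> [S3'] | (I36, S3') \<Rightarrow> [S3]
      | (I37, S2) \<Rightarrow> [S6] | (I37, S3) \<Rightarrow> [S5] | (I37, S6) \<Rightarrow> [S3']
      | (I37, S3') \<Rightarrow> [S3] | (I45, S1) \<Rightarrow> [S6] | (I45, S3) \<Rightarrow> [S2]
      | (I45, S5) \<Rightarrow> [S4] | (I45, S6) \<Rightarrow> [S3'] | (I46, S5) \<Rightarrow> [S4]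
      | (I46, S6) \<Rightarrow> [S3'] | (I47, S2) \<Rightarrow> [S6] | (I47, S5) \<Rightarrow> [S4]
      | (I47, S6) \<Rightarrow> [S3'] | (I56, S2) \<Rightarrow> [S2] | (I56, S4) \<Rightarrow> [S5]
      | (I56, S5) \<Rightarrow> [S4] | (I56, S6) \<Rightarrow> [S3'] | (I57, S4) \<Rightarrow> [S5]
      | (I57, S5) \<Rightarrow> [S4] | (I57, S6) \<Rightarrow> [S3'] | (I67, S1) \<Rightarrow> [S2]
      | (I67, S3) \<Rightarrow> [S6] | (I67, S4) \<Rightarrow> [S5] | (I67, S5) \<Rightarrow> [S4]
      | (I67, S6) \<Rightarrow> [S3'] | _ \<Rightarrow> [])"
| "schreier_word (Neg q) l = (case (q, l) of
      (I01, S1) \<Rightarrow> [S6] | (I01, S2) \<Rightarrow> [S5] | (I01, S3) \<Rightarrow> [S4]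
      | (I01, S4) \<Rightarrow> [S3] | (I01, S5) \<Rightarrow> [S2] | (I02, S1) \<Rightarrow> [S6]
      | (I02, S2) \<Rightarrow> [S5] | (I02, S3) \<Rightarrow> [S4] | (I02, S4) \<Rightarrow> [S3]
      | (I03, S1) \<Rightarrow> [S6] | (I03, S2) \<Rightarrow> [S5] | (I03, S3) \<Rightarrow> [S4]
      | (I03, S6) \<Rightarrow> [S2] | (I04, S1) \<Rightarrow> [S6] | (I04, S2) \<Rightarrow> [S5]
      | (I04, S5) \<Rightarrow> [S3] | (I04, S6) \<Rightarrow> [S2] | (I04, S3') \<Rightarrow> [S3']
      | (I05, S1) \<Rightarrow> [S6] | (I05, S4) \<Rightarrow> [S4] | (I05, S5) \<Rightarrow> [S3]
      | (I05, S6) \<Rightarrow> [S2] | (I05, S3') \<Rightarrow> [S3'] | (I06, S3) \<Rightarrow> [S5]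
      | (I06, S4) \<Rightarrow> [S4] | (I06, S5) \<Rightarrow> [S3] | (I06, S6) \<Rightarrow> [S2]
      | (I06, S3') \<Rightarrow> [S3'] | (I07, S2) \<Rightarrow> [S6] | (I07, S3) \<Rightarrow> [S5]
      | (I07, S4) \<Rightarrow> [S4] | (I07, S5) \<Rightarrow> [S3] | (I07, S6) \<Rightarrow> [S2]
      | (I07, S3') \<Rightarrow> [S3'] | (I12, S1) \<Rightarrow> [S2] | (I12, S2) \<Rightarrow> [S3]
      | (I12, S3) \<Rightarrow> [S4] | (I12, S4) \<Rightarrow> [S3'] | (I12, S6) \<Rightarrow> [S6]
      | (I13, S1) \<Rightarrow> [S2] | (I13, S2) \<Rightarrow> [S3] | (I13, S3) \<Rightarrow> [S4]
      | (I14, S1) \<Rightarrow> [S2] | (I14, S2) \<Rightarrow> [S3] | (I14, S5) \<Rightarrow> [S3']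
      | (I14, S3') \<Rightarrow> [S5] | (I15, S1) \<Rightarrow> [S2] | (I15, S4) \<Rightarrow> [S4]
      | (I15, S5) \<Rightarrow> [S3'] | (I15, S3') \<Rightarrow> [S5] | (I16, S3) \<Rightarrow> [S3]
      | (I16, S4) \<Rightarrow> [S4] | (I16, S5) \<Rightarrow> [S3'] | (I16, S3') \<Rightarrow> [S5]
      | (I17, S2) \<Rightarrow> [S2] | (I17, S3) \<Rightarrow> [S3] | (I17, S4) \<Rightarrow> [S4]
      | (I17, S5) \<Rightarrow> [S3'] | (I17, S3') \<Rightarrow> [S5] | (I23, S1) \<Rightarrow> [S2]
      | (I23, S2) \<Rightarrow> [S3] | (I23, S3) \<Rightarrow> [S4] | (I23, S5) \<Rightarrow> [S6]
      | (I24, S1) \<Rightarrow> [S2] | (I24, S2) \<Rightarrow> [S3] | (I24, S3') \<Rightarrow> [S5]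
      | (I25, S1) \<Rightarrow> [S2] | (I25, S4) \<Rightarrow> [S4] | (I25, S3') \<Rightarrow> [S5]
      | (I26, S3) \<Rightarrow> [S3] | (I26, S4) \<Rightarrow> [S4] | (I26, S3') \<Rightarrow> [S5]
      | (I27, S2) \<Rightarrow> [S2] | (I27, S3) \<Rightarrow> [S3] | (I27, S4) \<Rightarrow> [S4]
      | (I27, S3') \<Rightarrow> [S5] | (I34, S1) \<Rightarrow> [S2] | (I34, S2) \<Rightarrow> [S3]
      | (I34, S4) \<Rightarrow> [S6] | (I34, S6) \<Rightarrow> [S3'] | (I34, S3') \<Rightarrow> [S5]
      | (I35, S1) \<Rightarrow> [S2] | (I35, S6) \<Rightarrow> [S3'] | (I35, S3') \<Rightarrow> [S5]
      | (I36, S3) \<Rightarrow> [S3] | (I36, S6) \<Rightarrow> [S3'] | (I36, S3') \<Rightarrow> [S5]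
      | (I37, S2) \<Rightarrow> [S2] | (I37, S3) \<Rightarrow> [S3] | (I37, S6) \<Rightarrow> [S3']
      | (I37, S3') \<Rightarrow> [S5] | (I45, S1) \<Rightarrow> [S2] | (I45, S3) \<Rightarrow> [S6]
      | (I45, S5) \<Rightarrow> [S4] | (I45, S6) \<Rightarrow> [S3'] | (I46, S5) \<Rightarrow> [S4]
      | (I46, S6) \<Rightarrow> [S3'] | (I47, S2) \<Rightarrow> [S2] | (I47, S5) \<Rightarrow> [S4]
      | (I47, S6) \<Rightarrow> [S3'] | (I56, S2) \<Rightarrow> [S6] | (I56, S4) \<Rightarrow> [S3]
      | (I56, S5) \<Rightarrow> [S4] | (I56, S6) \<Rightarrow> [S3'] | (I57, S4) \<Rightarrow> [S3]
      | (I57, S5) \<Rightarrow> [S4] | (I57, S6) \<Rightarrow> [S3'] | (I67, S1) \<Rightarrow> [S6]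
      | (I67, S3) \<Rightarrow> [S2] | (I67, S4) \<Rightarrow> [S3] | (I67, S5) \<Rightarrow> [S4]
      | (I67, S6) \<Rightarrow> [S3'] | _ \<Rightarrow> [])"

lemma act_word_coset_word: "act_word (coset_word p) (Pos I07) = p"
  by (cases p; rename_tac q; case_tac q) (simp_all add: act_def)

lemma schreier_word_in_G: "schreier_word p l \<in> lists G_letters"
  by (cases p; rename_tac q; case_tac q; cases l) (simp_all add: G_letters_def)

lemma schreier_step: "hword (coset_word p @ [l]) = hword (schreier_word p l @ coset_word (act l p))"
  by (cases p; rename_tac q; case_tac q; cases l; rule hword_eqI) (simp_all add: basis_labels_def act_def)

lemma schreier_rewrite:
  "\<exists>g \<in> lists G_letters. hword (coset_word p @ w) = hword (g @ coset_word (act_word w p))"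
proof (induction w arbitrary: p)
  case Nil
  show ?case by (rule bexI[of _ "[]"]) simp_all
next
  case (Cons l w)
  obtain g where g: "g \<in> lists G_letters"
    and IH: "hword (coset_word (act l p) @ w) = hword (g @ coset_word (act_word w (act l p)))"
    using Cons.IH by blast
  have "hword ((coset_word p @ [l]) @ w) = hword ((schreier_word p l @ coset_word (act l p)) @ w)"
    by (rule hword_append_cong) (simp_all add: schreier_step)
  also have "\<dots> = hword (schreier_word p l @ g @ coset_word (act_word (l # w) p))"
    using hword_append_cong[OF refl IH] by simp
  finally show ?case using g schreier_word_in_G by (intro bexI[of _ "schreier_word p l @ g"]) auto
qed

lemma row_hword: "row (hword w) 1 = label_row (act_word w (Pos I07))"
proof -
  have base: "unit_vec 8 1 = label_row (Pos I07)"
    by (simp add: unit_vec_def label_row_eval del: vec_of_list_Cons)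
  have "row (hword w) 1 = mult_vec_mat (unit_vec 8 1) (hword w)"
    by (rule row_eq_mult_vec_mat_unit[OF hword_carrier]) simp
  also have "\<dots> = label_row (act_word w (Pos I07))"
    by (simp only: base label_row_hword)
  finally show ?thesis .
qed

lemma label_row_eq_base: "label_row p = label_row (Pos I07) \<Longrightarrow> p = Pos I07"
  by (cases p; rename_tac q; case_tac q) (simp_all add: label_row_eval del: vec_of_list_Cons)

text \<open>Injectivity only has to be checked at Pos I07, since words act transitively.\<close>

lemma label_row_inj: "label_row p = label_row q \<Longrightarrow> p = q"
proof -
  assume eq: "label_row p = label_row q"
  let ?w = "coset_word q"
  have "label_row (act_word (rev ?w) p) = label_row (act_word (rev ?w) q)"
    using eq label_row_hword[of _ "rev ?w"] by metis
  also have "act_word (rev ?w) q = Pos I07"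
    using act_word_rev[of ?w "Pos I07"] by (simp add: act_word_coset_word)
  finally have "act_word (rev ?w) p = Pos I07" by (rule label_row_eq_base)
  then show "p = q"
    using act_word_rev[of "rev ?w" p] act_word_coset_word[of q] by simp
qed

definition label_coset :: "vlabel \<Rightarrow> complex mat set" where
  "label_coset p = {\<alpha> \<in> carrier Hgrp. row \<alpha> 1 = label_row p}"

lemma label_coset_eq: "label_coset p = {hword w | w. act_word w (Pos I07) = p}"
proof (intro equalityI subsetI)
  fix \<alpha> assume "\<alpha> \<in> label_coset p"
  then obtain w where "\<alpha> = hword w" "row (hword w) 1 = label_row p"
    by (auto simp: label_coset_def carrier_Hgrp)
  then show "\<alpha> \<in> {hword w | w. act_word w (Pos I07) = p}"
    by (auto simp only: row_hword dest: label_row_inj)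
next
  fix \<alpha> assume "\<alpha> \<in> {hword w | w. act_word w (Pos I07) = p}"
  then obtain w where "\<alpha> = hword w" "act_word w (Pos I07) = p" by blast
  then show "\<alpha> \<in> label_coset p"
    using row_hword[of w] by (auto simp: label_coset_def carrier_Hgrp)
qed

lemma label_coset_inj: "inj label_coset"
proof (rule injI)
  fix p q assume "label_coset p = label_coset q"
  moreover have "hword (coset_word p) \<in> label_coset p"
    using act_word_coset_word by (auto simp: label_coset_eq)
  ultimately have "hword (coset_word p) \<in> label_coset q" by simp
  then have "row (hword (coset_word p)) 1 = label_row q"
    by (simp add: label_coset_def)
  then have "label_row (act_word (coset_word p) (Pos I07)) = label_row q"
    by (simp only: row_hword)
  then show "p = q" by (simp add: act_word_coset_word label_row_inj)
qed

lemma Hgrp_mult [simp]: "mult Hgrp = (*)"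
  by (simp add: Hgrp_def)

lemma rcoset_Ggrp: "carrier Ggrp #>\<^bsub>Hgrp\<^esub> hword w = label_coset (act_word w (Pos I07))"
proof (intro equalityI subsetI)
  fix \<beta> assume "\<beta> \<in> carrier Ggrp #>\<^bsub>Hgrp\<^esub> hword w"
  then obtain g where g: "g \<in> lists G_letters" and "\<beta> = hword (g @ w)"
    by (auto simp: r_coset_def carrier_Ggrp hword_append)
  then show "\<beta> \<in> label_coset (act_word w (Pos I07))"
    unfolding label_coset_eq using G_letters_fix_base[OF g] by auto
next
  fix \<beta> assume "\<beta> \<in> label_coset (act_word w (Pos I07))"
  then obtain v where \<beta>: "\<beta> = hword v" and v: "act_word v (Pos I07) = act_word w (Pos I07)"
    by (auto simp: label_coset_eq)
  let ?t = "coset_word (act_word w (Pos I07))"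
  obtain g where g: "g \<in> lists G_letters" "hword w = hword (g @ ?t)"
    using schreier_rewrite[of "Pos I07" w] by auto
  obtain g' where g': "g' \<in> lists G_letters" "hword v = hword (g' @ ?t)"
    using schreier_rewrite[of "Pos I07" v] v by auto
  have "hword ((g' @ rev g) @ w) = hword (g' @ rev g @ g @ ?t)"
    using hword_append_cong[OF refl g(2), of "g' @ rev g"] by simp
  also have "\<dots> = \<beta>"
    using hword_append_cong[OF refl hword_rev_cancel, of g' g ?t] by (simp add: \<beta> g'(2))
  finally have "\<beta> = hword (g' @ rev g) * hword w"
    unfolding hword_append[of "g' @ rev g" w] by (rule sym)
  moreover have "hword (g' @ rev g) \<in> carrier Ggrp"
    using g(1) g'(1) unfolding carrier_Ggrp by (intro imageI) auto
  ultimately show "\<beta> \<in> carrier Ggrp #>\<^bsub>Hgrp\<^esub> hword w"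
    by (auto simp: r_coset_def)
qed

lemma rcosets_Ggrp: "rcosets\<^bsub>Hgrp\<^esub> (carrier Ggrp) = range label_coset"
proof -
  have "rcosets\<^bsub>Hgrp\<^esub> (carrier Ggrp) = (\<lambda>w. label_coset (act_word w (Pos I07))) ` UNIV"
    by (auto simp: RCOSETS_def carrier_Hgrp rcoset_Ggrp)
  also have "\<dots> = range label_coset"
  proof
    show "range label_coset \<subseteq> (\<lambda>w. label_coset (act_word w (Pos I07))) ` UNIV"
      by (metis image_subsetI rangeI act_word_coset_word)
  qed auto
  finally show ?thesis .
qed

lemma label_coset_rmult: "label_coset p #>\<^bsub>Hgrp\<^esub> hword w = label_coset (act_word w p)"
proof (intro equalityI subsetI)
  fix \<beta> assume "\<beta> \<in> label_coset p #>\<^bsub>Hgrp\<^esub> hword w"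
  then obtain u where "act_word u (Pos I07) = p" "\<beta> = hword (u @ w)"
    by (auto simp: r_coset_def label_coset_eq hword_append)
  then show "\<beta> \<in> label_coset (act_word w p)" by (auto simp: label_coset_eq)
next
  fix \<beta> assume "\<beta> \<in> label_coset (act_word w p)"
  then obtain u where u: "act_word u (Pos I07) = act_word w p" and \<beta>: "\<beta> = hword u"
    by (auto simp: label_coset_eq)
  have "hword ((u @ rev w) @ w) = hword u"
    using hword_append_cong[OF refl hword_rev_cancel[of w "[]"], of u] by simp
  then have "\<beta> = hword (u @ rev w) * hword w"
    unfolding \<beta> hword_append[of "u @ rev w" w] by (rule sym)
  moreover have "hword (u @ rev w) \<in> label_coset p"
    using u act_word_rev[of w p] by (auto simp: label_coset_eq)
  ultimately show "\<beta> \<in> label_coset p #>\<^bsub>Hgrp\<^esub> hword w"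
    by (auto simp: r_coset_def)
qed

section \<open>The orbits of Q\<close>

definition Q_orbit_labels :: "vlabel \<Rightarrow> vlabel set" where
  "Q_orbit_labels p = {act_word w p | w. w \<in> lists Q_letters}"

lemma Q_orbit_label_coset: "Q_orbit (label_coset p) = label_coset ` Q_orbit_labels p"
proof -
  have "Q_orbit (label_coset p) = (\<lambda>w. label_coset p #>\<^bsub>Hgrp\<^esub> hword w) ` lists Q_letters"
    unfolding Q_orbit_def carrier_Qgrp by blast
  also have "\<dots> = label_coset ` Q_orbit_labels p"
    unfolding Q_orbit_labels_def label_coset_rmult by blast
  finally show ?thesis .
qed

lemma Q_orbits_eq: "Q_orbits = range (\<lambda>p. label_coset ` Q_orbit_labels p)"
  unfolding Q_orbits_def rcosets_Ggrp by (simp add: image_image Q_orbit_label_coset)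

lemma Q_orbit_labels_eqI:
  assumes closed: "\<And>l q. l \<in> Q_letters \<Longrightarrow> q \<in> S \<Longrightarrow> act l q \<in> S"
    and reach: "\<And>q. q \<in> S \<Longrightarrow> \<exists>w \<in> lists Q_letters. act_word w b = q"
    and p: "p \<in> S"
  shows "Q_orbit_labels p = S"
proof (intro equalityI subsetI)
  fix q assume "q \<in> Q_orbit_labels p"
  then obtain w where "w \<in> lists Q_letters" "q = act_word w p"
    by (auto simp: Q_orbit_labels_def)
  then show "q \<in> S" using p by (induction w arbitrary: p) (auto intro: closed)
next
  fix q assume "q \<in> S"
  obtain u where u: "u \<in> lists Q_letters" "act_word u b = p" using reach[OF p] by blast
  obtain v where v: "v \<in> lists Q_letters" "act_word v b = q" using reach[OF \<open>q \<in> S\<close>] by blast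
  have "act_word (rev u @ v) p = q" using u(2) v(2) act_word_rev[of u b] by simp
  moreover have "rev u @ v \<in> lists Q_letters" using u(1) v(1) by (auto simp: in_lists_conv_set)
  ultimately show "q \<in> Q_orbit_labels p" unfolding Q_orbit_labels_def by blast
qed

definition O1_labels :: "vlabel set" where
  "O1_labels =
    {Pos I02, Pos I03, Pos I04, Pos I05, Pos I06, Pos I07}
    \<union> {Neg I12, Neg I13, Neg I14, Neg I15, Neg I16, Neg I17}"

definition O2_labels :: "vlabel set" where
  "O2_labels =
    {Pos I12, Pos I13, Pos I14, Pos I15, Pos I16, Pos I17}
    \<union> {Neg I02, Neg I03, Neg I04, Neg I05, Neg I06, Neg I07}"

definition O3_labels :: "vlabel set" where
  "O3_labels =
    {Pos I01, Neg I01}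
    \<union> {Pos I23, Pos I24, Pos I25, Pos I26, Pos I27, Pos I34, Pos I35, Pos I36,
       Pos I37, Pos I45, Pos I46, Pos I47, Pos I56, Pos I57, Pos I67}
    \<union> {Neg I23, Neg I24, Neg I25, Neg I26, Neg I27, Neg I34, Neg I35, Neg I36,
       Neg I37, Neg I45, Neg I46, Neg I47, Neg I56, Neg I57, Neg I67}"

definition orbit_base :: "vlabel \<Rightarrow> vlabel" where
  "orbit_base p = (if p \<in> O1_labels then Pos I02 else if p \<in> O2_labels then Pos I12 else Pos I01)"

primrec orbit_word :: "vlabel \<Rightarrow> letter list" where
  "orbit_word (Pos q) = (case q of
      I01 \<Rightarrow> [] | I02 \<Rightarrow> [] | I03 \<Rightarrow> [S5]
      | I04 \<Rightarrow> [S5, S4] | I05 \<Rightarrow> [S5, S4, S3]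
      | I06 \<Rightarrow> [S5, S4, S3, S2] | I07 \<Rightarrow> [S5, S4, S3, S2, S1]
      | I12 \<Rightarrow> [] | I13 \<Rightarrow> [S5] | I14 \<Rightarrow> [S5, S4]
      | I15 \<Rightarrow> [S5, S4, S3] | I16 \<Rightarrow> [S5, S4, S3, S2]
      | I17 \<Rightarrow> [S5, S4, S3, S2, S1]
      | I23 \<Rightarrow> [S3', S4, S3, S2, S1, S5, S4, S3, S2, S3', S4, S3, S5, S4]
      | I24 \<Rightarrow> [S3', S4, S3, S2, S1, S5, S4, S3, S2, S3', S4, S3, S5]
      | I25 \<Rightarrow> [S3', S4, S3, S2, S1, S5, S4, S3, S2, S3', S4, S5]
      | I26 \<Rightarrow> [S3', S4, S3, S2, S1, S5, S4, S3, S3', S4, S5]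
      | I27 \<Rightarrow> [S3', S4, S3, S2, S5, S4, S3, S3', S4, S5]
      | I34 \<Rightarrow> [S3', S4, S3, S2, S1, S5, S4, S3, S2, S3', S4, S3]
      | I35 \<Rightarrow> [S3', S4, S3, S2, S1, S5, S4, S3, S2, S3', S4]
      | I36 \<Rightarrow> [S3', S4, S3, S2, S1, S5, S4, S3, S3', S4]
      | I37 \<Rightarrow> [S3', S4, S3, S2, S5, S4, S3, S3', S4]
      | I45 \<Rightarrow> [S3', S4, S3, S2, S1, S5, S4, S3, S2, S3']
      | I46 \<Rightarrow> [S3', S4, S3, S2, S1, S5, S4, S3, S3']
      | I47 \<Rightarrow> [S3', S4, S3, S2, S5, S4, S3, S3']
      | I56 \<Rightarrow> [S3', S4, S3, S2, S1, S5, S4, S3']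
      | I57 \<Rightarrow> [S3', S4, S3, S2, S5, S4, S3']
      | I67 \<Rightarrow> [S3', S4, S3, S5, S4, S3'])"
| "orbit_word (Neg q) = (case q of
      I01 \<Rightarrow> [S3', S4, S3, S2, S1, S5, S4, S3, S2, S3', S4, S3, S5, S4, S3']
      | I02 \<Rightarrow> [S5, S3'] | I03 \<Rightarrow> [S3'] | I04 \<Rightarrow> [S3', S4]
      | I05 \<Rightarrow> [S3', S4, S3] | I06 \<Rightarrow> [S3', S4, S3, S2]
      | I07 \<Rightarrow> [S3', S4, S3, S2, S1] | I12 \<Rightarrow> [S5, S3']
      | I13 \<Rightarrow> [S3'] | I14 \<Rightarrow> [S3', S4] | I15 \<Rightarrow> [S3', S4, S3]
      | I16 \<Rightarrow> [S3', S4, S3, S2] | I17 \<Rightarrow> [S3', S4, S3, S2, S1]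
      | I23 \<Rightarrow> [S3'] | I24 \<Rightarrow> [S3', S4] | I25 \<Rightarrow> [S3', S4, S3]
      | I26 \<Rightarrow> [S3', S4, S3, S2] | I27 \<Rightarrow> [S3', S4, S3, S2, S1]
      | I34 \<Rightarrow> [S3', S4, S5] | I35 \<Rightarrow> [S3', S4, S3, S5]
      | I36 \<Rightarrow> [S3', S4, S3, S2, S5] | I37 \<Rightarrow> [S3', S4, S3, S2, S1, S5]
      | I45 \<Rightarrow> [S3', S4, S3, S5, S4] | I46 \<Rightarrow> [S3', S4, S3, S2, S5, S4]
      | I47 \<Rightarrow> [S3', S4, S3, S2, S1, S5, S4]
      | I56 \<Rightarrow> [S3', S4, S3, S2, S5, S4, S3]
      | I57 \<Rightarrow> [S3', S4, S3, S2, S1, S5, S4, S3]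
      | I67 \<Rightarrow> [S3', S4, S3, S2, S1, S5, S4, S3, S2])"

lemma orbit_word: "orbit_word p \<in> lists Q_letters \<and> act_word (orbit_word p) (orbit_base p) = p"
  by (cases p; rename_tac q; case_tac q)
    (simp_all add: Q_letters_def orbit_base_def O1_labels_def O2_labels_def act_def)

lemma O_labels_cover: "p \<in> O1_labels \<or> p \<in> O2_labels \<or> p \<in> O3_labels"
  by (cases p; rename_tac q; case_tac q) (simp_all add: O1_labels_def O2_labels_def O3_labels_def)

lemma Q_orbit_labels_O1: "p \<in> O1_labels \<Longrightarrow> Q_orbit_labels p = O1_labels"
proof (rule Q_orbit_labels_eqI[where b = "Pos I02"])
  show "act l q \<in> O1_labels" if "l \<in> Q_letters" "q \<in> O1_labels" for l q
    using that by (auto simp: Q_letters_def O1_labels_def act_def)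
  show "\<exists>w \<in> lists Q_letters. act_word w (Pos I02) = q" if "q \<in> O1_labels" for q
  proof -
    have "orbit_base q = Pos I02"
      using that by (auto simp: orbit_base_def O1_labels_def O2_labels_def O3_labels_def)
    then show ?thesis using orbit_word[of q] by metis
  qed
qed

lemma Q_orbit_labels_O2: "p \<in> O2_labels \<Longrightarrow> Q_orbit_labels p = O2_labels"
proof (rule Q_orbit_labels_eqI[where b = "Pos I12"])
  show "act l q \<in> O2_labels" if "l \<in> Q_letters" "q \<in> O2_labels" for l q
    using that by (auto simp: Q_letters_def O2_labels_def act_def)
  show "\<exists>w \<in> lists Q_letters. act_word w (Pos I12) = q" if "q \<in> O2_labels" for q
  proof -
    have "orbit_base q = Pos I12"
      using that by (auto simp: orbit_base_def O1_labels_def O2_labels_def O3_labels_def)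
    then show ?thesis using orbit_word[of q] by metis
  qed
qed

lemma Q_orbit_labels_O3: "p \<in> O3_labels \<Longrightarrow> Q_orbit_labels p = O3_labels"
proof (rule Q_orbit_labels_eqI[where b = "Pos I01"])
  show "act l q \<in> O3_labels" if "l \<in> Q_letters" "q \<in> O3_labels" for l q
    using that by (auto simp: Q_letters_def O3_labels_def act_def)
  show "\<exists>w \<in> lists Q_letters. act_word w (Pos I01) = q" if "q \<in> O3_labels" for q
  proof -
    have "orbit_base q = Pos I01"
      using that by (auto simp: orbit_base_def O1_labels_def O2_labels_def O3_labels_def)
    then show ?thesis using orbit_word[of q] by metis
  qed
qed

lemma range_Q_orbit_labels: "range Q_orbit_labels = {O1_labels, O2_labels, O3_labels}"
proof -
  have "Pos I02 \<in> O1_labels" "Pos I12 \<in> O2_labels" "Pos I01 \<in> O3_labels"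
    by (simp_all add: O1_labels_def O2_labels_def O3_labels_def)
  then show ?thesis
    using O_labels_cover Q_orbit_labels_O1 Q_orbit_labels_O2 Q_orbit_labels_O3 by blast
qed

lemma sum_of_bool_mult:
  "(a::nat) < n \<Longrightarrow> (\<Sum>k\<in>{0..<n}. of_bool (k = a) * f k) = (f a :: 'a::semiring_1)"
  by (simp add: sum.delta)

lemma sum_upto_8: "(\<Sum>k\<in>{0..<8::nat}. f k) = f 0 + f 1 + f 2 + f 3 + f 4 + f 5 + f 6 + f 7"
  by (simp add: atLeast0LessThan lessThan_nat_numeral add_ac)

lemma le_7_cases: "(k::nat) \<le> 7 \<Longrightarrow> k = 0 \<or> k = 1 \<or> k = 2 \<or> k = 3 \<or> k = 4 \<or> k = 5 \<or> k = 6 \<or> k = 7"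
  by arith

lemma le_7_iff: "(j \<le> (7::nat)) = (j < 8)" by linarith

lemma x_coord_less: "k \<le> 7 \<Longrightarrow> x_coord k < 8"
  by (drule le_7_cases) (auto simp: x_coord_def)

lemma xc_eq: "xc k w = w $ x_coord k"
  by (simp add: xc_def x_coord_def)

lemma pos_row_scalar_prod:
  assumes "w \<in> carrier_vec 8" "i \<le> 7" "j \<le> 7"
  shows "pos_row i j \<bullet> w = xc i w + xc j w - xc 7 w"
proof -
  have "pos_row i j \<bullet> w = (\<Sum>k\<in>{0..<8}. (of_bool (k = x_coord i) + of_bool (k = x_coord j)
      - of_bool (k = x_coord 7)) * w $ k)"
    using assms(1) by (simp add: pos_row_def scalar_prod_def)
  also have "\<dots> = xc i w + xc j w - xc 7 w"
    using assms(2,3) by (simp add: algebra_simps sum.distrib sum_subtractf sum_of_bool_mult x_coord_less xc_eq)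
  finally show ?thesis .
qed

lemma neg_row_scalar_prod:
  assumes "w \<in> Wset" "i \<le> 7" "j \<le> 7"
  shows "neg_row i j \<bullet> w = 1 + xc 7 w - xc i w - xc j w"
proof -
  have w: "w \<in> carrier_vec 8" "2 + 3 * w $ 0 = w $ 1 + w $ 2 + w $ 3 + w $ 4 + w $ 5 + w $ 6 + w $ 7"
    using assms(1) by (simp_all add: Wset_def)
  have "neg_row i j \<bullet> w = (\<Sum>k\<in>{0..<8}. (if k = 0 then - 3 / 2 else 1 / 2) * w $ k) - pos_row i j \<bullet> w"
    using w(1) by (simp add: neg_row_def scalar_prod_def pos_row_def left_diff_distrib sum_subtractf)
  also have "(\<Sum>k\<in>{0..<8}. (if k = 0 then - 3 / 2 else 1 / 2) * w $ k) = (1 :: complex)"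
    using w(2) by (simp add: sum_upto_8 field_simps)
  finally show ?thesis using pos_row_scalar_prod[OF w(1) assms(2,3)] by simp
qed

lemma row_eq_if_agree_on_Wset:
  assumes r: "r \<in> carrier_vec 8" and r': "r' \<in> carrier_vec 8"
    and agree: "\<And>w. w \<in> Wset \<Longrightarrow> r \<bullet> w = r' \<bullet> w"
  shows "r = r'"
proof -
  have unit: "r $ k = r' $ k" if "1 \<le> k" "k \<le> 7" for k
  proof -
    have "2 \<cdot>\<^sub>v unit_vec 8 k \<in> Wset"
      using that by (auto simp: Wset_def dest!: le_7_cases)
    then show ?thesis using agree that r r' by fastforce
  qed
  have "unit_vec 8 0 + 5 \<cdot>\<^sub>v unit_vec 8 1 \<in> Wset"
    by (simp add: Wset_def)
  then have "r \<bullet> (unit_vec 8 0 + 5 \<cdot>\<^sub>v unit_vec 8 1) = r' \<bullet> (unit_vec 8 0 + 5 \<cdot>\<^sub>v unit_vec 8 1)"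
    by (rule agree)
  then have "r $ 0 + 5 * r $ 1 = r' $ 0 + 5 * r' $ 1"
    using r r' by (simp add: scalar_prod_def sum_upto_8 mult.commute)
  with unit[of 1] have "r $ 0 = r' $ 0" by simp
  show ?thesis
  proof (rule eq_vecI)
    fix i assume "i < dim_vec r'"
    then have "i = 0 \<or> 1 \<le> i \<and> i \<le> 7" using r' by auto
    then show "r $ i = r' $ i" using unit \<open>r $ 0 = r' $ 0\<close> by auto
  qed (use r r' in simp)
qed

lemma coset_by_second_row:
  assumes "\<And>w. w \<in> Wset \<Longrightarrow> label_row p \<bullet> w = f w"
  shows "{\<alpha> \<in> carrier Hgrp. \<forall>w \<in> Wset. (\<alpha> *\<^sub>v w) $ 1 = f w} = label_coset p"
proof -
  have "(\<forall>w \<in> Wset. (\<alpha> *\<^sub>v w) $ 1 = f w) \<longleftrightarrow> row \<alpha> 1 = label_row p" if "\<alpha> \<in> carrier Hgrp" for \<alpha>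
  proof -
    have \<alpha>: "\<alpha> \<in> carrier_mat 8 8" using that by (auto simp: carrier_Hgrp)
    have second: "(\<alpha> *\<^sub>v w) $ 1 = row \<alpha> 1 \<bullet> w" if "w \<in> Wset" for w
      using \<alpha> that by (simp add: Wset_def)
    show ?thesis
    proof
      assume "\<forall>w \<in> Wset. (\<alpha> *\<^sub>v w) $ 1 = f w"
      then have "row \<alpha> 1 \<bullet> w = label_row p \<bullet> w" if "w \<in> Wset" for w
        using that second assms by simp
      then show "row \<alpha> 1 = label_row p"
        using row_eq_if_agree_on_Wset row_carrier_vec[of 1 8 \<alpha> 8] \<alpha> by simp
    next
      assume "row \<alpha> 1 = label_row p"
      then show "\<forall>w \<in> Wset. (\<alpha> *\<^sub>v w) $ 1 = f w" using second assms by simp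
    qed
  qed
  then show ?thesis unfolding label_coset_def by blast
qed

lemma ipair_idx_bound: "ipair_idx q = (i, j) \<Longrightarrow> i < j \<and> j \<le> 7"
  by (cases q) auto

lemma label_coset_Pos: "label_coset (Pos q) = vpos (fst (ipair_idx q)) (snd (ipair_idx q))"
proof -
  obtain i j where ij: "ipair_idx q = (i, j)" by (cases "ipair_idx q")
  then have "i \<le> 7" "j \<le> 7" using ipair_idx_bound[OF ij] by simp_all
  then have "vpos i j = label_coset (Pos q)"
    unfolding vpos_def by (intro coset_by_second_row) (simp add: ij pos_row_scalar_prod Wset_def)
  then show ?thesis by (simp add: ij)
qed

lemma label_coset_Neg: "label_coset (Neg q) = vneg (fst (ipair_idx q)) (snd (ipair_idx q))"
proof -
  obtain i j where ij: "ipair_idx q = (i, j)" by (cases "ipair_idx q")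
  then have "i \<le> 7" "j \<le> 7" using ipair_idx_bound[OF ij] by simp_all
  then have "vneg i j = label_coset (Neg q)"
    unfolding vneg_def by (intro coset_by_second_row) (simp add: ij neg_row_scalar_prod)
  then show ?thesis by (simp add: ij)
qed

lemma set_comprehension_interval: "{f j | j. a \<le> j \<and> j < (b::nat)} = set (map f [a..<b])"
  by auto

lemma set_comprehension_pairs:
  "{f i j | i j. a \<le> i \<and> i < j \<and> j < (b::nat)} = set [f i j. i \<leftarrow> [a..<b], j \<leftarrow> [Suc i..<b]]"
proof (intro equalityI subsetI)
  fix x assume "x \<in> {f i j | i j. a \<le> i \<and> i < j \<and> j < b}"
  then obtain i j where "x = f i j" "a \<le> i" "i < j" "j < b" by blast
  then show "x \<in> set [f i j. i \<leftarrow> [a..<b], j \<leftarrow> [Suc i..<b]]"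
    by (auto intro!: bexI[of _ i] imageI)
qed (auto simp: Suc_le_eq; blast)

lemma O1_eq: "O1 = label_coset ` O1_labels"
  unfolding O1_def O1_labels_def le_7_iff set_comprehension_interval
  by (simp add: upt_rec label_coset_Pos label_coset_Neg)

lemma O2_eq: "O2 = label_coset ` O2_labels"
  unfolding O2_def O2_labels_def le_7_iff set_comprehension_interval
  by (simp add: upt_rec label_coset_Pos label_coset_Neg)

lemma O3_eq: "O3 = label_coset ` O3_labels"
  unfolding O3_def O3_labels_def le_7_iff set_comprehension_pairs
  by (simp add: upt_rec label_coset_Pos label_coset_Neg)

theorem Q_orbits_explicit: "Q_orbits = {O1, O2, O3} \<and> card Q_orbits = 3"
proof -
  have "Q_orbits = image label_coset ` {O1_labels, O2_labels, O3_labels}"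
    unfolding Q_orbits_eq range_Q_orbit_labels[symmetric] by (simp add: image_image)
  then have eq: "Q_orbits = {O1, O2, O3}" by (simp add: O1_eq O2_eq O3_eq)
  have "Pos I02 \<in> O1_labels" "Pos I02 \<notin> O2_labels" "Pos I02 \<notin> O3_labels" "Pos I12 \<in> O2_labels"
    "Pos I12 \<notin> O3_labels" by (simp_all add: O1_labels_def O2_labels_def O3_labels_def)
  then have "O1 \<noteq> O2" "O1 \<noteq> O3" "O2 \<noteq> O3"
    by (auto simp: O1_eq O2_eq O3_eq inj_image_eq_iff[OF label_coset_inj])
  then show ?thesis unfolding eq by simp
qed

section \<open>Q is isomorphic to H1\<close>

lemmas explicit_mat = mat_eq_mat_of_rows_list[of 8 8] mat_eq_mat_of_rows_list[of 7 7] tmat_def one_mat_def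
  upt_0_8 upt_rec

text \<open>The columns of emb7 span a complement, invariant under Q, of the vector fix_col fixed by Q;
  proj7 and fix_row are the coordinate maps of this splitting.\<close>

definition emb7 :: "complex mat" where
  "emb7 = mat_of_rows_list 7
    [[0, 1, 1, 1, 0, 0, -2], [3/2, 3/2, 3/2, 3/2, -1, -1, -2], [0, 1, 1, 1, 0, -1, -1],
     [0, 1, 1, 1, -1, 0, -1], [0, 0, 0, 1, 0, 0, -1], [0, 0, 1, 0, 0, 0, -1],
     [0, 1, 0, 0, 0, 0, -1], [1/2, 1/2, 1/2, 1/2, 0, 0, -1]]"

definition proj7 :: "complex mat" where
  "proj7 = mat_of_rows_list 8
    [[1/2, 1/2, -1/2, -1/2, -1/2, -1/2, -1/2, 1/2], [1, 0, 0, 0, -1, -1, 0, 0],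
     [1, 0, 0, 0, -1, 0, -1, 0], [1, 0, 0, 0, 0, -1, -1, 0], [2, 0, 0, -1, -1, -1, -1, 0],
     [2, 0, -1, 0, -1, -1, -1, 0], [1, 0, 0, 0, -1, -1, -1, 0]]"

definition fix_col :: "complex mat" where
  "fix_col = mat_of_rows_list 1 [[0], [-1], [0], [0], [0], [0], [0], [1]]"

definition fix_row :: "complex mat" where
  "fix_row = mat_of_rows_list 8 [[-3/4, -1/4, 1/4, 1/4, 1/4, 1/4, 1/4, 3/4]]"

lemma emb7_carrier [simp]: "emb7 \<in> carrier_mat 8 7" by (simp add: emb7_def)

lemma proj7_carrier [simp]: "proj7 \<in> carrier_mat 7 8" by (simp add: proj7_def)

lemma fix_col_carrier [simp]: "fix_col \<in> carrier_mat 8 1" by (simp add: fix_col_def)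

lemma fix_row_carrier [simp]: "fix_row \<in> carrier_mat 1 8" by (simp add: fix_row_def)

lemma proj7_emb7: "proj7 * emb7 = 1\<^sub>m 7"
  by (simp add: proj7_def emb7_def explicit_mat mat_of_rows_list_mult)

lemma emb7_proj7_splitting: "emb7 * proj7 + fix_col * fix_row = 1\<^sub>m 8"
  by (simp add: proj7_def emb7_def fix_col_def fix_row_def explicit_mat mat_of_rows_list_mult
      mat_of_rows_list_add)

primrec d6_letter :: "letter \<Rightarrow> complex mat" where
  "d6_letter S1 = a5" | "d6_letter S2 = a4" | "d6_letter S3 = a3" | "d6_letter S4 = a2"
| "d6_letter S5 = a1" | "d6_letter S6 = 1\<^sub>m 7" | "d6_letter S3' = a1'"
  \<comment> \<open>s6 is not a generator of Q, so the value at S6 is irrelevant\<close>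

abbreviation d6_word :: "letter list \<Rightarrow> complex mat" where
  "d6_word \<equiv> word_mat 7 d6_letter"

lemma X1m_carrier [simp]: "X1m \<in> carrier_mat 7 7"
  by (simp add: X1m_def)

lemma d6_letter_carrier [simp]: "d6_letter l \<in> carrier_mat 7 7"
  by (cases l) (simp_all add: a1_def a2_def a3_def a4_def a5_def a1'_def)

lemma d6_letter_involution: "d6_letter l * d6_letter l = 1\<^sub>m 7"
  by (cases l)
    (simp_all add: a1_def a2_def a3_def a4_def a5_def a1'_def X1m_def explicit_mat mat_of_rows_list_mult)

lemma Q_letter_emb7: "l \<in> Q_letters \<Longrightarrow> letter_mat l * emb7 = emb7 * d6_letter l"
  by (auto simp: Q_letters_def s1_def s2_def s3_def s4_def s5_def s3'_def a1_def a2_def a3_def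
      a4_def a5_def a1'_def Xm_def Ym_def X1m_def emb7_def explicit_mat mat_of_rows_list_mult)

lemma Q_letter_fix_col: "l \<in> Q_letters \<Longrightarrow> letter_mat l * fix_col = fix_col"
  by (auto simp: Q_letters_def s1_def s2_def s3_def s4_def s5_def s3'_def Xm_def Ym_def fix_col_def
      explicit_mat mat_of_rows_list_mult)

lemma Q_word_emb7: "w \<in> lists Q_letters \<Longrightarrow> hword w * emb7 = emb7 * d6_word w"
proof (induction w)
  case (Cons l w)
  then have "hword (l # w) * emb7 = letter_mat l * (emb7 * d6_word w)"
    by (simp add: assoc_mult_mat[of _ 8 8 _ 8 _ 7])
  also have "\<dots> = (letter_mat l * emb7) * d6_word w"
    by (simp add: assoc_mult_mat[of _ 8 8 _ 7 _ 7])
  also have "\<dots> = emb7 * d6_word (l # w)"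
    using Cons.prems Q_letter_emb7[of l] by (simp add: assoc_mult_mat[of _ 8 7 _ 7 _ 7])
  finally show ?case .
qed (simp add: right_mult_one_mat[of _ 8 7] left_mult_one_mat[of _ 8 7])

lemma Q_word_fix_col: "w \<in> lists Q_letters \<Longrightarrow> hword w * fix_col = fix_col"
proof (induction w)
  case (Cons l w)
  then show ?case
    using Q_letter_fix_col[of l] assoc_mult_mat[OF letter_mat_carrier hword_carrier fix_col_carrier] by simp
qed (simp add: left_mult_one_mat[OF fix_col_carrier])

definition restrict_D6 :: "complex mat \<Rightarrow> complex mat" where
  "restrict_D6 A = proj7 * A * emb7"

lemma restrict_D6_hword: "w \<in> lists Q_letters \<Longrightarrow> restrict_D6 (hword w) = d6_word w"
  unfolding restrict_D6_def by (rule compression_eq[of _ 8 7]) (simp_all add: proj7_emb7 Q_word_emb7)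

lemma carrier_H1grp: "carrier H1grp = d6_word ` lists Q_letters"
proof -
  let ?S = "{tmat 7 1 2, tmat 7 2 3, tmat 7 3 4, tmat 7 5 6, tmat 7 6 7, X1m}"
  have "tmat 7 1 2 = d6_word [S5, S4, S3', S4, S5]"
    by (simp add: a1_def a2_def a1'_def explicit_mat mat_of_rows_list_mult)
  moreover have "tmat 7 2 3 = d6_word [S5]" "tmat 7 3 4 = d6_word [S4]" "tmat 7 5 6 = d6_word [S2]"
    "tmat 7 6 7 = d6_word [S1]" "X1m = d6_word [S3]"
    by (simp_all add: a1_def a2_def a3_def a4_def a5_def right_mult_one_mat[of _ 7 7])
  ultimately have words: "tmat 7 1 2 = d6_word [S5, S4, S3', S4, S5]" "tmat 7 2 3 = d6_word [S5]"
    "tmat 7 3 4 = d6_word [S4]" "tmat 7 5 6 = d6_word [S2]" "tmat 7 6 7 = d6_word [S1]" "X1m = d6_word [S3]"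
    by simp_all
  have gens: "?S = d6_word ` {[S5, S4, S3', S4, S5], [S5], [S4], [S2], [S1], [S3]}"
    by (simp only: words image_insert image_empty)
  have w14: "tmat 7 1 4 = tmat 7 3 4 * tmat 7 2 3 * tmat 7 1 2 * tmat 7 2 3 * tmat 7 3 4"
    by (simp add: explicit_mat mat_of_rows_list_mult)
  have "generate (GLm 7) ?S = d6_word ` lists Q_letters"
  proof (rule generate_GLm_eq_words)
    fix s assume "s \<in> ?S"
    then obtain w where "w \<in> {[S5, S4, S3', S4, S5], [S5], [S4], [S2], [S1], [S3]}" "s = d6_word w"
      unfolding gens by blast
    then have w: "w \<in> lists Q_letters" "s = d6_word w" by (auto simp: Q_letters_def)
    moreover have "rev w \<in> lists Q_letters" using w(1) by (simp add: in_lists_conv_set)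
    ultimately show "s \<in> d6_word ` lists Q_letters \<and> inv\<^bsub>GLm 7\<^esub> s \<in> d6_word ` lists Q_letters"
      by (simp add: m_inv_word_mat d6_letter_involution)
  next
    have "tmat 7 1 4 \<in> generate (GLm 7) ?S"
      unfolding w14 by (intro generate_GLm_mult generate.incl) simp_all
    then show "d6_letter ` Q_letters \<subseteq> generate (GLm 7) ?S"
      by (auto simp: Q_letters_def a1_def a2_def a3_def a4_def a5_def a1'_def intro: generate.incl)
  qed simp
  then show ?thesis by (simp add: H1grp_def)
qed

lemma restrict_D6_iso: "restrict_D6 \<in> iso Qgrp H1grp"
proof -
  have image: "restrict_D6 ` carrier Qgrp = carrier H1grp"
  proof -
    have "restrict_D6 ` carrier Qgrp = (\<lambda>w. restrict_D6 (hword w)) ` lists Q_letters"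
      by (simp add: carrier_Qgrp image_image)
    also have "\<dots> = d6_word ` lists Q_letters"
      by (rule image_cong) (simp_all add: restrict_D6_hword)
    finally show ?thesis by (simp add: carrier_H1grp)
  qed
  have hom: "restrict_D6 \<in> hom Qgrp H1grp"
  proof (rule homI)
    fix x assume "x \<in> carrier Qgrp"
    then show "restrict_D6 x \<in> carrier H1grp" using image by blast
  next
    fix x y assume "x \<in> carrier Qgrp" "y \<in> carrier Qgrp"
    then obtain u v where uv: "u \<in> lists Q_letters" "v \<in> lists Q_letters" "x = hword u" "y = hword v"
      by (auto simp: carrier_Qgrp)
    then have "restrict_D6 (x * y) = d6_word (u @ v)"
      by (simp add: hword_append[symmetric] restrict_D6_hword)
    also have "\<dots> = d6_word u * d6_word v"
      by (rule word_mat_append) simp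
    finally have "restrict_D6 (x * y) = d6_word u * d6_word v" .
    with uv show "restrict_D6 (x \<otimes>\<^bsub>Qgrp\<^esub> y) = restrict_D6 x \<otimes>\<^bsub>H1grp\<^esub> restrict_D6 y"
      by (simp add: Qgrp_def H1grp_def restrict_D6_hword)
  qed
  have inj: "inj_on restrict_D6 (carrier Qgrp)"
  proof (rule inj_onI)
    fix x y assume "x \<in> carrier Qgrp" "y \<in> carrier Qgrp" and eq: "restrict_D6 x = restrict_D6 y"
    then obtain u v where uv: "u \<in> lists Q_letters" "v \<in> lists Q_letters" "x = hword u" "y = hword v"
      by (auto simp: carrier_Qgrp)
    with eq have "d6_word u = d6_word v" by (simp add: restrict_D6_hword)
    with uv have "hword u * emb7 = hword v * emb7" by (simp add: Q_word_emb7)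
    then show "x = y"
      using eq_if_compressions_eq[OF emb7_carrier proj7_carrier fix_col_carrier fix_row_carrier
          emb7_proj7_splitting hword_carrier Q_word_fix_col[OF uv(1)] hword_carrier Q_word_fix_col[OF uv(2)]]
        uv(3,4) by simp
  qed
  from hom inj image show ?thesis by (simp add: iso_def bij_betw_def)
qed

lemma restrict_D6_letter: "l \<in> Q_letters \<Longrightarrow> restrict_D6 (letter_mat l) = d6_letter l"
  using restrict_D6_hword[of "[l]"] by (simp add: right_mult_one_mat[of _ 8 8] right_mult_one_mat[of _ 7 7])

lemma restrict_D6_generators:
  "restrict_D6 s1 = a5" "restrict_D6 s2 = a4" "restrict_D6 s3 = a3" "restrict_D6 s4 = a2"
  "restrict_D6 s5 = a1" "restrict_D6 s3' = a1'"
  using restrict_D6_letter[of S1] restrict_D6_letter[of S2] restrict_D6_letter[of S3]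
    restrict_D6_letter[of S4] restrict_D6_letter[of S5] restrict_D6_letter[of S3']
  by (simp_all add: Q_letters_def)

theorem proposition5p3:
  shows "(\<exists>m. m \<in> iso Qgrp H1grp \<and> m s1 = a5 \<and> m s2 = a4 \<and> m s3 = a3 \<and> m s4 = a2
              \<and> m s5 = a1 \<and> m s3' = a1')
       \<and> Q_orbits = {O1, O2, O3} \<and> card Q_orbits = 3"
  using restrict_D6_iso restrict_D6_generators Q_orbits_explicit by blast

end
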